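(* Let $X$ be a uniformly joinable, chain connected Hausdorff uniform space and let $f\colon X\to Y$ generate the uniform structure of the (Hausdorff) uniform space $Y$. The following are equivalent: (a) $f$ is a generalized uniform covering map; (b) $f$ satisfies conditions GP1 and GP2; (c) $\widetilde f\colon GP(X,x_0)\to GP(Y,f(x_0))$ is a uniform equivalence for some $x_0\in X$.
   Context: $f(E)=\{(f(x),f(y)):(x,y)\in E\}$; a surjection $f$ generates the uniform structure of its range if the sets $f(E)$ form a base of it. $R(X,E)$ is the Rips complex (vertex set $X$, simplices the finite $F$ with $F\times F\subset E$); $e(x,y)$ the edge-path; $E$-chains $x_0,\dots,x_n$ ($(x_i,x_{i+1})\in E$) are regarded as edge-paths in $R(X,E)$. $X$ is chain connected if for each $E$ any two points are joined by an $E$-chain. Paths $c,d$ in $R(X,E)$ with end-points in $X$ are $E$-homotopic if their initial points $x_c,x_d$ and terminal points $y_c,y_d$ satisfy $(x_c,x_d),(y_c,y_d)\in E$ and $c\simeq e(x_c,x_d)\ast d\ast e(y_d,y_c)$ rel. end-points in $R(X,E)$. A generalized path from $x$ to $y$ is a family $\{[c_E]\}_E$ of homotopy classes rel. end-points of paths from $x$ to $y$ in $R(X,E)$ with $c_F\simeq c_E$ in $R(X,E)$ for $F\subset E$; it is $F$-short if $(x,y)\in F$ and $c_F\simeq e(x,y)$ in $R(X,F)$; generalized paths $c,d$ are $F$-homotopic if $c_F$ is $F$-homotopic to $d_F$. $GP(X,x_0)$: generalized paths from $x_0$ with uniform base $F^\ast=\{(c,d): c,d\ F\text{-homotopic}\}$.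 $\widetilde f(c)_F=[f_E(c_E)]$, $E=f^{-1}(F)$. $X$ is uniformly joinable if for each $E$ there is $F$ with any $(x,y)\in F$ joined by an $E$-short generalized path. A generalized uniform covering map is an $f$ generating the uniform structure of $Y$ with: GP1: for every $x_0$ every generalized path in $Y$ from $f(x_0)$ is $\widetilde f(d)$ for a generalized path $d$ from $x_0$; GP2: for every entourage $E$ of $X$ there is $F$ such that generalized paths $\alpha,\beta$ in $X$ with common origin are $E$-homotopic if $\widetilde f(\alpha),\widetilde f(\beta)$ are $f(F)$-homotopic; C1: for every $E$ there is $F$ such that every $f(F)$-chain starting at $f(x_0)$ lifts to an $E$-chain starting at $x_0$; C2: for every $E$ there is $F$ such that $F$-chains $\alpha,\beta$ with common origin are $E$-homotopic if $f(\alpha),f(\beta)$ are $f(F)$-homotopic. *)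

theory Defs
  imports Main
begin

definition uniformity :: "'a set \<Rightarrow> ('a \<times> 'a) set set \<Rightarrow> bool" where
  "uniformity X U \<longleftrightarrow> U \<noteq> {}
     \<and> (\<forall>E\<in>U. Id_on X \<subseteq> E \<and> E \<subseteq> X \<times> X)
     \<and> (\<forall>E\<in>U. \<forall>F. E \<subseteq> F \<and> F \<subseteq> X \<times> X \<longrightarrow> F \<in> U)
     \<and> (\<forall>E\<in>U. \<forall>F\<in>U. E \<inter> F \<in> U)
     \<and> (\<forall>E\<in>U. E\<inverse> \<in> U)
     \<and> (\<forall>E\<in>U. \<exists>F\<in>U. F O F \<subseteq> E)"

definition hausdorff_unif :: "'a set \<Rightarrow> ('a \<times> 'a) set set \<Rightarrow> bool" where
  "hausdorff_unif X U \<longleftrightarrow> \<Inter>U = Id_on X"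

text \<open>Symmetric entourages (the paper's entourages are symmetric).\<close>
definition SE :: "('a \<times> 'a) set set \<Rightarrow> ('a \<times> 'a) set set" where
  "SE U = {E \<in> U. sym E}"

definition pimage :: "('a \<Rightarrow> 'b) \<Rightarrow> ('a \<times> 'a) set \<Rightarrow> ('b \<times> 'b) set" where
  "pimage f E = (\<lambda>(x, y). (f x, f y)) ` E"

definition generates_unif ::
  "('a \<Rightarrow> 'b) \<Rightarrow> 'a set \<Rightarrow> ('a \<times> 'a) set set \<Rightarrow> 'b set \<Rightarrow> ('b \<times> 'b) set set \<Rightarrow> bool" where
  "generates_unif f X U Y V \<longleftrightarrow> f ` X = Y
     \<and> (\<forall>E\<in>U. pimage f E \<in> V) \<and> (\<forall>W\<in>V. \<exists>E\<in>U. pimage f E \<subseteq> W)"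

definition ucont ::
  "'a set \<Rightarrow> ('a \<times> 'a) set set \<Rightarrow> ('b \<times> 'b) set set \<Rightarrow> ('a \<Rightarrow> 'b) \<Rightarrow> bool" where
  "ucont A UA UB g \<longleftrightarrow> (\<forall>W\<in>UB. {(a, b). a \<in> A \<and> b \<in> A \<and> (g a, g b) \<in> W} \<in> UA)"

definition uniform_equivalence ::
  "'a set \<Rightarrow> ('a \<times> 'a) set set \<Rightarrow> 'b set \<Rightarrow> ('b \<times> 'b) set set \<Rightarrow> ('a \<Rightarrow> 'b) \<Rightarrow> bool" where
  "uniform_equivalence A UA B UB g \<longleftrightarrow> bij_betw g A B
     \<and> ucont A UA UB g \<and> ucont B UB UA (inv_into A g)"

definition rips_simplex :: "('a \<times> 'a) set \<Rightarrow> 'a set \<Rightarrow> bool" where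
  "rips_simplex E S \<longleftrightarrow> finite S \<and> S \<noteq> {} \<and> S \<times> S \<subseteq> E"

definition edgepath :: "('a \<times> 'a) set \<Rightarrow> 'a list \<Rightarrow> bool" where
  "edgepath E p \<longleftrightarrow> p \<noteq> [] \<and> (\<forall>x\<in>set p. rips_simplex E {x})
     \<and> (\<forall>i. Suc i < length p \<longrightarrow> rips_simplex E {p ! i, p ! Suc i})"

definition epstep :: "('a \<times> 'a) set \<Rightarrow> 'a list \<Rightarrow> 'a list \<Rightarrow> bool" where
  "epstep E p q \<longleftrightarrow>
     (\<exists>a b x. p = a @ [x, x] @ b \<and> q = a @ [x] @ b) \<or>
     (\<exists>a b x y z. p = a @ [x, y, z] @ b \<and> q = a @ [x, z] @ b \<and> rips_simplex E {x, y, z})"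

definition epstepR :: "('a \<times> 'a) set \<Rightarrow> ('a list \<times> 'a list) set" where
  "epstepR E = {(p, q). edgepath E p \<and> edgepath E q \<and> epstep E p q}"

text \<open>Homotopy rel. end-points of edge-paths in R(X,E) (edge-path equivalence).\<close>
definition ephtp :: "('a \<times> 'a) set \<Rightarrow> 'a list \<Rightarrow> 'a list \<Rightarrow> bool" where
  "ephtp E p q \<longleftrightarrow> edgepath E p \<and> edgepath E q
     \<and> (p, q) \<in> (epstepR E \<union> (epstepR E)\<inverse>)\<^sup>*"

definition epclass :: "('a \<times> 'a) set \<Rightarrow> 'a list \<Rightarrow> 'a list set" where
  "epclass E p = {q. ephtp E p q}"

text \<open>E-homotopy of paths: c ~ e(x_c,x_d) * d * e(y_d,y_c) rel end-points.\<close>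
definition ehtp :: "('a \<times> 'a) set \<Rightarrow> 'a list \<Rightarrow> 'a list \<Rightarrow> bool" where
  "ehtp E c d \<longleftrightarrow> (hd c, hd d) \<in> E \<and> (last c, last d) \<in> E
     \<and> ephtp E c ([hd c] @ d @ [last c])"

definition echain :: "'a set \<Rightarrow> ('a \<times> 'a) set \<Rightarrow> 'a list \<Rightarrow> bool" where
  "echain X E p \<longleftrightarrow> p \<noteq> [] \<and> set p \<subseteq> X \<and> (\<forall>i. Suc i < length p \<longrightarrow> (p ! i, p ! Suc i) \<in> E)"

definition chain_connected :: "'a set \<Rightarrow> ('a \<times> 'a) set set \<Rightarrow> bool" where
  "chain_connected X U \<longleftrightarrow> (\<forall>E\<in>SE U. \<forall>x\<in>X. \<forall>y\<in>X.
     \<exists>p. echain X E p \<and> hd p = x \<and> last p = y)"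

text \<open>A generalized path is a family E \<mapsto> c E of edge-path homotopy classes, indexed by
  the (symmetric) entourages; c E = {} for non-entourages.\<close>
definition gpath :: "('a \<times> 'a) set set \<Rightarrow> 'a \<Rightarrow> 'a \<Rightarrow> (('a \<times> 'a) set \<Rightarrow> 'a list set) \<Rightarrow> bool" where
  "gpath U x y c \<longleftrightarrow> (\<forall>E. E \<notin> SE U \<longrightarrow> c E = {})
     \<and> (\<forall>E\<in>SE U. \<exists>p. edgepath E p \<and> hd p = x \<and> last p = y \<and> c E = epclass E p)
     \<and> (\<forall>E\<in>SE U. \<forall>F\<in>SE U. F \<subseteq> E \<longrightarrow> c F \<subseteq> c E)"

definition gpath_from :: "'a set \<Rightarrow> ('a \<times> 'a) set set \<Rightarrow> 'a \<Rightarrow> (('a \<times> 'a) set \<Rightarrow> 'a list set) \<Rightarrow> bool" where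
  "gpath_from X U x c \<longleftrightarrow> (\<exists>y\<in>X. gpath U x y c)"

definition gp_short :: "('a \<times> 'a) set \<Rightarrow> 'a \<Rightarrow> 'a \<Rightarrow> (('a \<times> 'a) set \<Rightarrow> 'a list set) \<Rightarrow> bool" where
  "gp_short F x y c \<longleftrightarrow> (x, y) \<in> F \<and> [x, y] \<in> c F"

definition gp_htp :: "('a \<times> 'a) set \<Rightarrow> (('a \<times> 'a) set \<Rightarrow> 'a list set) \<Rightarrow> (('a \<times> 'a) set \<Rightarrow> 'a list set) \<Rightarrow> bool" where
  "gp_htp F c d \<longleftrightarrow> (\<exists>p\<in>c F. \<exists>q\<in>d F. ehtp F p q)"

definition uniformly_joinable :: "'a set \<Rightarrow> ('a \<times> 'a) set set \<Rightarrow> bool" where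
  "uniformly_joinable X U \<longleftrightarrow> (\<forall>E\<in>SE U. \<exists>F\<in>SE U. \<forall>(x, y)\<in>F.
     \<exists>c. gpath U x y c \<and> gp_short E x y c)"

definition GP :: "'a set \<Rightarrow> ('a \<times> 'a) set set \<Rightarrow> 'a \<Rightarrow> (('a \<times> 'a) set \<Rightarrow> 'a list set) set" where
  "GP X U x0 = {c. gpath_from X U x0 c}"

definition GP_unif :: "'a set \<Rightarrow> ('a \<times> 'a) set set \<Rightarrow> 'a \<Rightarrow>
    ((('a \<times> 'a) set \<Rightarrow> 'a list set) \<times> (('a \<times> 'a) set \<Rightarrow> 'a list set)) set set" where
  "GP_unif X U x0 = {W. W \<subseteq> GP X U x0 \<times> GP X U x0 \<and>
     (\<exists>F\<in>SE U. {(c, d). c \<in> GP X U x0 \<and> d \<in> GP X U x0 \<and> gp_htp F c d} \<subseteq> W)}"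

definition fpre :: "('a \<Rightarrow> 'b) \<Rightarrow> 'a set \<Rightarrow> ('b \<times> 'b) set \<Rightarrow> ('a \<times> 'a) set" where
  "fpre f X F = {(x, y). x \<in> X \<and> y \<in> X \<and> (f x, f y) \<in> F}"

definition ftilde :: "('a \<Rightarrow> 'b) \<Rightarrow> 'a set \<Rightarrow> ('b \<times> 'b) set set \<Rightarrow>
    (('a \<times> 'a) set \<Rightarrow> 'a list set) \<Rightarrow> (('b \<times> 'b) set \<Rightarrow> 'b list set)" where
  "ftilde f X V c = (\<lambda>F. if F \<in> SE V then {q. \<exists>p\<in>c (fpre f X F). ephtp F (map f p) q} else {})"

definition GP1 :: "('a \<Rightarrow> 'b) \<Rightarrow> 'a set \<Rightarrow> ('a \<times> 'a) set set \<Rightarrow> 'b set \<Rightarrow> ('b \<times> 'b) set set \<Rightarrow> bool" where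
  "GP1 f X U Y V \<longleftrightarrow> (\<forall>x0\<in>X. \<forall>c. gpath_from Y V (f x0) c \<longrightarrow>
     (\<exists>d. gpath_from X U x0 d \<and> ftilde f X V d = c))"

definition GP2 :: "('a \<Rightarrow> 'b) \<Rightarrow> 'a set \<Rightarrow> ('a \<times> 'a) set set \<Rightarrow> 'b set \<Rightarrow> ('b \<times> 'b) set set \<Rightarrow> bool" where
  "GP2 f X U Y V \<longleftrightarrow> (\<forall>E\<in>SE U. \<exists>F\<in>SE U. \<forall>x0\<in>X. \<forall>\<alpha> \<beta>.
     gpath_from X U x0 \<alpha> \<and> gpath_from X U x0 \<beta>
     \<and> gp_htp (pimage f F) (ftilde f X V \<alpha>) (ftilde f X V \<beta>) \<longrightarrow> gp_htp E \<alpha> \<beta>)"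

definition C1 :: "('a \<Rightarrow> 'b) \<Rightarrow> 'a set \<Rightarrow> ('a \<times> 'a) set set \<Rightarrow> 'b set \<Rightarrow> bool" where
  "C1 f X U Y \<longleftrightarrow> (\<forall>E\<in>SE U. \<exists>F\<in>SE U. \<forall>x0\<in>X. \<forall>\<beta>.
     echain Y (pimage f F) \<beta> \<and> hd \<beta> = f x0 \<longrightarrow>
     (\<exists>\<alpha>. echain X E \<alpha> \<and> hd \<alpha> = x0 \<and> map f \<alpha> = \<beta>))"

definition C2 :: "('a \<Rightarrow> 'b) \<Rightarrow> 'a set \<Rightarrow> ('a \<times> 'a) set set \<Rightarrow> bool" where
  "C2 f X U \<longleftrightarrow> (\<forall>E\<in>SE U. \<exists>F\<in>SE U. \<forall>\<alpha> \<beta>.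
     echain X F \<alpha> \<and> echain X F \<beta> \<and> hd \<alpha> = hd \<beta>
     \<and> ehtp (pimage f F) (map f \<alpha>) (map f \<beta>) \<longrightarrow> ehtp E \<alpha> \<beta>)"

definition gen_uniform_covering :: "('a \<Rightarrow> 'b) \<Rightarrow> 'a set \<Rightarrow> ('a \<times> 'a) set set \<Rightarrow> 'b set \<Rightarrow> ('b \<times> 'b) set set \<Rightarrow> bool" where
  "gen_uniform_covering f X U Y V \<longleftrightarrow> generates_unif f X U Y V
     \<and> GP1 f X U Y V \<and> GP2 f X U Y V \<and> C1 f X U Y \<and> C2 f X U"

end

theory Submission
  imports Defs
begin

text \<open>Generalized paths form a groupoid under concatenation and reversal of the representing
  edge-paths, and the induced map ftilde is compatible with both. Uniform joinability makes
  every chain a representative of a generalized path, and chain connectedness joins any two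
  points by one. Conjugating with a generalized path from x0 to x1 therefore transports
  surjectivity of ftilde and the uniform continuity of its inverse between base points; at a
  single base point these are GP1 and GP2, while injectivity follows from GP2 because, X being
  Hausdorff, generalized paths that are E-homotopic for every E coincide. For C1 a short edge of
  Y over f x comes from a short generalized path in X; its image is lifted at x by GP1, and GP2
  compares the lift with the constant path at x. For C2 chains are regarded as representatives
  of generalized paths, to which GP2 applies.\<close>

lemma adjacent_Cons_Cons:
  "(\<forall>i. Suc i < length (x # y # p) \<longrightarrow> R ((x # y # p) ! i) ((x # y # p) ! Suc i))
   \<longleftrightarrow> R x y \<and> (\<forall>i. Suc i < length (y # p) \<longrightarrow> R ((y # p) ! i) ((y # p) ! Suc i))"
  by (auto simp: less_Suc_eq_0_disj)

lemma rips_simplex_triple_iff: "rips_simplex E {x, y, z} \<longleftrightarrow> {x, y, z} \<times> {x, y, z} \<subseteq> E"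
  by (auto simp: rips_simplex_def)

lemma edgepath_Nil [simp]: "\<not> edgepath E []"
  by (simp add: edgepath_def)

lemma edgepath_singleton [simp]: "edgepath E [x] \<longleftrightarrow> (x, x) \<in> E"
  by (simp add: edgepath_def rips_simplex_def)

lemma edgepath_Cons_Cons [simp]:
  "edgepath E (x # y # p) \<longleftrightarrow> (x, x) \<in> E \<and> (x, y) \<in> E \<and> (y, x) \<in> E \<and> edgepath E (y # p)"
  unfolding edgepath_def adjacent_Cons_Cons[where R = "\<lambda>a b. rips_simplex E {a, b}"]
  by (auto simp: rips_simplex_def)

lemma edgepath_append_iff:
  "a \<noteq> [] \<Longrightarrow> b \<noteq> [] \<Longrightarrow> edgepath E (a @ b) \<longleftrightarrow>
     edgepath E a \<and> edgepath E b \<and> (last a, hd b) \<in> E \<and> (hd b, last a) \<in> E"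
proof (induction a rule: induct_list012)
  case (2 x)
  then show ?case by (cases b) auto
qed auto

lemma edgepath_refl: "edgepath E p \<Longrightarrow> x \<in> set p \<Longrightarrow> (x, x) \<in> E"
  by (auto simp: edgepath_def rips_simplex_def)

lemma edgepath_nonempty: "edgepath E p \<Longrightarrow> p \<noteq> []"
  by auto

lemma edgepath_rev: "edgepath E p \<Longrightarrow> edgepath E (rev p)"
proof (induction p rule: induct_list012)
  case (3 x y zs)
  then have "edgepath E ((rev zs @ [y]) @ [x])"
    by (subst edgepath_append_iff) auto
  then show ?case by simp
qed auto

lemma edgepath_map: "(\<And>a b. (a, b) \<in> E \<Longrightarrow> (f a, f b) \<in> F) \<Longrightarrow> edgepath E p \<Longrightarrow> edgepath F (map f p)"
  by (induction p rule: induct_list012) auto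

lemma edgepath_concat:
  assumes "edgepath E p" "edgepath E q" "last p = hd q"
  shows "edgepath E (p @ tl q)"
proof (cases q rule: remdups_adj.cases)
  case (3 x y xs)
  then show ?thesis
    using assms edgepath_nonempty edgepath_append_iff[of p "y # xs"] by auto
qed (use assms in auto)

lemma edgepath_replace:
  assumes "edgepath E (a @ p @ b)" "edgepath E q" "hd q = hd p" "last q = last p" "p \<noteq> []"
  shows "edgepath E (a @ q @ b)"
  using assms edgepath_nonempty[OF assms(2)]
  by (cases "a = []"; cases "b = []") (auto simp: edgepath_append_iff)

section \<open>Homotopy of edge-paths\<close>

lemma epstep_stutterI: "epstep E (a @ x # x # b) (a @ x # b)"
  unfolding epstep_def by auto

lemma epstep_shortcutI: "rips_simplex E {x, y, z} \<Longrightarrow> epstep E (a @ x # y # z # b) (a @ x # z # b)"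
  unfolding epstep_def by auto

lemma epstep_cases:
  assumes "epstep E p q"
  obtains a x b where "p = a @ x # x # b" "q = a @ x # b"
  | a x y z b where "p = a @ x # y # z # b" "q = a @ x # z # b" "rips_simplex E {x, y, z}"
  using assms unfolding epstep_def by auto

lemma epstep_map:
  assumes "\<And>a b. (a, b) \<in> E \<Longrightarrow> (f a, f b) \<in> F" "epstep E p q"
  shows "epstep F (map f p) (map f q)"
  using assms(2)
proof (cases rule: epstep_cases)
  case (2 a x y z b)
  then have "rips_simplex F {f x, f y, f z}" using assms(1) by (auto simp: rips_simplex_triple_iff)
  then show ?thesis using 2 by (simp add: epstep_shortcutI)
qed (simp add: epstep_stutterI)

lemma epstep_rev: assumes "epstep E p q" shows "epstep E (rev p) (rev q)"
  using assms
proof (cases rule: epstep_cases)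
  case (2 a x y z b)
  then have "rips_simplex E {z, y, x}" by (simp add: insert_commute)
  then show ?thesis using 2 by (simp add: epstep_shortcutI)
qed (simp add: epstep_stutterI)

lemma epstep_append: assumes "epstep E p q" shows "epstep E (a @ p @ b) (a @ q @ b)"
  using assms
  by (cases rule: epstep_cases)
    (metis append.assoc append_Cons epstep_stutterI, metis append.assoc append_Cons epstep_shortcutI)

lemma epstep_hd_last: "epstep E p q \<Longrightarrow> hd p = hd q \<and> last p = last q"
  by (erule epstep_cases) (auto simp: hd_append last_append)

lemma ephtp_refl: "edgepath E p \<Longrightarrow> ephtp E p p"
  by (simp add: ephtp_def)

lemma ephtp_edgepath: "ephtp E p q \<Longrightarrow> edgepath E p \<and> edgepath E q"
  by (simp add: ephtp_def)

lemma ephtp_sym: "ephtp E p q \<Longrightarrow> ephtp E q p"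
  unfolding ephtp_def
  by (metis converse_Un converse_converse rtrancl_converseI sup_commute)

lemma ephtp_trans [trans]: "ephtp E p q \<Longrightarrow> ephtp E q r \<Longrightarrow> ephtp E p r"
  unfolding ephtp_def by auto

lemma ephtp_step: "edgepath E p \<Longrightarrow> edgepath E q \<Longrightarrow> epstep E p q \<Longrightarrow> ephtp E p q"
  unfolding ephtp_def epstepR_def by auto

lemma ephtp_hd_last: "ephtp E p q \<Longrightarrow> hd p = hd q \<and> last p = last q"
proof -
  assume "ephtp E p q"
  then have "(p, q) \<in> (epstepR E \<union> (epstepR E)\<inverse>)\<^sup>*"
    by (simp add: ephtp_def)
  then show ?thesis
    by (induction rule: rtrancl_induct) (auto simp: epstepR_def dest: epstep_hd_last)
qed

text \<open>Homotopy is generated by elementary moves, so it is preserved by any map of edge-paths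
  that sends elementary moves (between paths satisfying an invariant P) to homotopies.\<close>
lemma ephtp_transfer:
  assumes inv: "\<And>p q. P p \<Longrightarrow> edgepath E p \<Longrightarrow> edgepath E q \<Longrightarrow> epstep E p q \<or> epstep E q p \<Longrightarrow> P q"
    and edge: "\<And>p. P p \<Longrightarrow> edgepath E p \<Longrightarrow> edgepath E' (\<phi> p)"
    and step: "\<And>p q. P p \<Longrightarrow> P q \<Longrightarrow> edgepath E p \<Longrightarrow> edgepath E q \<Longrightarrow> epstep E p q
                 \<Longrightarrow> ephtp E' (\<phi> p) (\<phi> q)"
    and h: "ephtp E p q" and P: "P p"
  shows "ephtp E' (\<phi> p) (\<phi> q)"
proof -
  from h have e: "edgepath E p" by (simp add: ephtp_def)
  from h have "(p, q) \<in> (epstepR E \<union> (epstepR E)\<inverse>)\<^sup>*"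
    by (simp add: ephtp_def)
  then have "P q \<and> ephtp E' (\<phi> p) (\<phi> q)"
  proof (induction rule: rtrancl_induct)
    case base
    show ?case using P e edge ephtp_refl by blast
  next
    case (step r s)
    then have "edgepath E r" "edgepath E s" "epstep E r s \<or> epstep E s r"
      by (auto simp: epstepR_def)
    moreover from this have "P s" using inv step.IH by blast
    ultimately show ?case
      using step.IH \<open>P s\<close> assms(3)[of r s] assms(3)[of s r] ephtp_trans ephtp_sym by blast
  qed
  then show ?thesis by blast
qed

lemma ephtp_map:
  assumes "\<And>a b. (a, b) \<in> E \<Longrightarrow> (f a, f b) \<in> F" "ephtp E p q"
  shows "ephtp F (map f p) (map f q)"
  by (rule ephtp_transfer[where P = "\<lambda>_. True"])
    (use assms in \<open>auto intro: ephtp_step edgepath_map epstep_map\<close>)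

lemma ephtp_mono: "E \<subseteq> E' \<Longrightarrow> ephtp E p q \<Longrightarrow> ephtp E' p q"
  using ephtp_map[of E id E' p q] by auto

lemma ephtp_rev: "ephtp E p q \<Longrightarrow> ephtp E (rev p) (rev q)"
  by (rule ephtp_transfer[where P = "\<lambda>_. True"]) (auto intro: ephtp_step edgepath_rev epstep_rev)

lemma ephtp_append_cong:
  assumes "edgepath E (a @ p @ b)" "ephtp E p q"
  shows "ephtp E (a @ p @ b) (a @ q @ b)"
proof (rule ephtp_transfer[where P = "\<lambda>r. hd r = hd p \<and> last r = last p" and \<phi> = "\<lambda>r. a @ r @ b"])
  have "p \<noteq> []" using assms(2) by (auto simp: ephtp_def)
  then have edge: "edgepath E (a @ r @ b)" if "hd r = hd p \<and> last r = last p" "edgepath E r" for r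
    using edgepath_replace[OF assms(1)] that by blast
  then show "edgepath E (a @ r @ b)" if "hd r = hd p \<and> last r = last p" "edgepath E r" for r
    using that by blast
  show "ephtp E (a @ r @ b) (a @ s @ b)"
    if "hd r = hd p \<and> last r = last p" "hd s = hd p \<and> last s = last p"
      "edgepath E r" "edgepath E s" "epstep E r s" for r s
    using that edge by (intro ephtp_step epstep_append) auto
  show "hd s = hd p \<and> last s = last p"
    if "hd r = hd p \<and> last r = last p" "epstep E r s \<or> epstep E s r" for r s
    using that epstep_hd_last by metis
qed (use assms in auto)

lemma edgepath_stutter_iff: "edgepath E (a @ x # x # b) \<longleftrightarrow> edgepath E (a @ x # b)"
  using edgepath_replace[of E a "[x]" b "[x, x]"] edgepath_replace[of E a "[x, x]" b "[x]"]
    edgepath_refl[of E "a @ x # b" x] edgepath_refl[of E "a @ x # x # b" x]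
  by auto

lemma ephtp_stutter: "edgepath E (a @ x # b) \<Longrightarrow> ephtp E (a @ x # x # b) (a @ x # b)"
  by (intro ephtp_step epstep_stutterI) (auto simp: edgepath_stutter_iff)

lemma ephtp_Cons_hd: "edgepath E p \<Longrightarrow> ephtp E (hd p # p) p"
  using ephtp_stutter[of E "[]"] by (cases p) auto

lemma ephtp_snoc_last: "edgepath E p \<Longrightarrow> ephtp E (p @ [last p]) p"
  using ephtp_stutter[of E "butlast p" "last p" "[]"] by (cases p rule: rev_cases) auto

lemma ephtp_concat:
  assumes "ephtp E p p'" "ephtp E q q'" "last p = hd q"
  shows "ephtp E (p @ tl q) (p' @ tl q')"
proof -
  have e: "edgepath E p" "edgepath E q" "edgepath E p'" "edgepath E q'"
    using assms by (auto simp: ephtp_def)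
  have hl: "last p = last p'" "hd q = hd q'"
    using assms ephtp_hd_last by metis+
  have concat_eq: "r @ tl s = butlast r @ s" if "edgepath E r" "edgepath E s" "last r = hd s" for r s
    using that by (cases s) (auto dest: edgepath_nonempty)
  have "ephtp E ([] @ p @ tl q) ([] @ p' @ tl q)"
    using assms(1) edgepath_concat[OF e(1,2) assms(3)] by (intro ephtp_append_cong) auto
  moreover have "ephtp E (butlast p' @ q @ []) (butlast p' @ q' @ [])"
    using calculation assms(2,3) concat_eq[OF e(3,2)] hl
    by (intro ephtp_append_cong) (auto simp: ephtp_def)
  ultimately show ?thesis
    using concat_eq[OF e(3,2)] concat_eq[OF e(3,4)] hl assms(3) ephtp_trans by auto
qed

lemma ephtp_rev_concat: "edgepath E p \<Longrightarrow> ephtp E (rev p @ tl p) [last p]"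
proof (induction p rule: induct_list012)
  case (3 x y zs)
  have yzs: "edgepath E (y # zs)" using "3.prems" by simp
  have yy: "(y, y) \<in> E" using edgepath_refl[OF yzs, of y] by simp
  have e: "edgepath E (rev zs @ y # zs)"
    using edgepath_concat[OF edgepath_rev[OF yzs] yzs] by simp
  have "ephtp E (rev zs @ y # x # y # zs) (rev zs @ y # y # zs)"
  proof (rule ephtp_step)
    show "edgepath E (rev zs @ y # x # y # zs)"
      using edgepath_concat[OF edgepath_rev[OF "3.prems"] "3.prems"] by simp
    show "edgepath E (rev zs @ y # y # zs)"
      using edgepath_replace[of E "rev zs" "[y]" zs "[y, y]"] e yy by simp
    show "epstep E (rev zs @ y # x # y # zs) (rev zs @ y # y # zs)"
      using yy "3.prems" by (intro epstep_shortcutI) (auto simp: rips_simplex_triple_iff)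
  qed
  also have "ephtp E \<dots> (rev zs @ y # zs)"
    using e by (rule ephtp_stutter)
  also have "ephtp E \<dots> [last (y # zs)]"
    using "3.IH"(2)[OF yzs] by simp
  finally show ?case by simp
qed (simp_all add: ephtp_refl)

lemma last_append_tl: "p \<noteq> [] \<Longrightarrow> q \<noteq> [] \<Longrightarrow> last p = hd q \<Longrightarrow> last (p @ tl q) = last q"
  by (cases q) auto

lemma ephtp_rev_concat_cancel:
  assumes "edgepath E p" "edgepath E q" "hd q = last p"
  shows "ephtp E (rev p @ tl (p @ tl q)) q"
proof -
  have "p \<noteq> []" "q \<noteq> []" using assms by auto
  then have "rev p @ tl (p @ tl q) = (rev p @ tl p) @ tl q" "[last p] @ tl q = q"
    using assms(3) by (cases p; cases q; simp)+
  moreover have "ephtp E ((rev p @ tl p) @ tl q) ([last p] @ tl q)"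
    using ephtp_rev_concat[OF assms(1)] ephtp_hd_last[OF ephtp_rev_concat[OF assms(1)]] assms
    by (intro ephtp_concat ephtp_refl) auto
  ultimately show ?thesis by simp
qed

lemma ehtp_edgepath: "ehtp E p q \<Longrightarrow> edgepath E p"
  by (simp add: ehtp_def ephtp_def)

lemma ephtp_pad: assumes "edgepath E p" shows "ephtp E (hd p # p @ [last p]) p"
proof -
  have "edgepath E (p @ [last p])"
    using ephtp_edgepath[OF ephtp_snoc_last[OF assms]] by blast
  from ephtp_Cons_hd[OF this] have "ephtp E (hd p # p @ [last p]) (p @ [last p])"
    using edgepath_nonempty[OF assms] by simp
  also have "ephtp E (p @ [last p]) p"
    using assms by (rule ephtp_snoc_last)
  finally show ?thesis .
qed

lemma ehtp_refl: assumes "edgepath E p" shows "ehtp E p p"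
proof -
  have "(hd p, hd p) \<in> E" "(last p, last p) \<in> E"
    using edgepath_refl[OF assms] edgepath_nonempty[OF assms] by auto
  then show ?thesis using ephtp_sym[OF ephtp_pad[OF assms]] by (simp add: ehtp_def)
qed

lemma ehtp_cong: assumes "ehtp E p q" "ephtp E p p'" "ephtp E q q'" shows "ehtp E p' q'"
proof -
  have "ephtp E p' p" using assms(2) by (rule ephtp_sym)
  also have "ephtp E p ([hd p] @ q @ [last p])" using assms(1) by (simp add: ehtp_def)
  also have "ephtp E \<dots> ([hd p] @ q' @ [last p])"
    using assms(1,3) calculation by (intro ephtp_append_cong) (auto simp: ephtp_def)
  finally have "ephtp E p' ([hd p] @ q' @ [last p])" .
  moreover have "hd p = hd p'" "last p = last p'" "hd q = hd q'" "last q = last q'"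
    using assms(2,3) ephtp_hd_last by metis+
  ultimately show ?thesis using assms(1) unfolding ehtp_def by simp
qed

lemma ehtp_mono: "E \<subseteq> E' \<Longrightarrow> ehtp E p q \<Longrightarrow> ehtp E' p q"
  unfolding ehtp_def using ephtp_mono by blast

lemma ehtp_map:
  assumes "\<And>a b. (a, b) \<in> E \<Longrightarrow> (f a, f b) \<in> F" "ehtp E p q" "q \<noteq> []"
  shows "ehtp F (map f p) (map f q)"
proof -
  have "p \<noteq> []" using ehtp_edgepath[OF assms(2)] by auto
  moreover have "(f (hd p), f (hd q)) \<in> F" "(f (last p), f (last q)) \<in> F"
    using assms(1,2) by (simp_all add: ehtp_def)
  moreover have "ephtp E p ([hd p] @ q @ [last p])"
    using assms(2) unfolding ehtp_def by blast
  then have "ephtp F (map f p) (map f ([hd p] @ q @ [last p]))"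
    using ephtp_map[of E f F, OF assms(1)] by blast
  ultimately show ?thesis using assms(3) unfolding ehtp_def by (simp add: hd_map last_map)
qed

lemma ehtp_prefix:
  assumes "ehtp E b b'" "hd b = hd b'" "edgepath E g" "last g = hd b" "b' \<noteq> []"
  shows "ehtp E (g @ tl b) (g @ tl b')"
proof -
  have ne: "b \<noteq> []" "g \<noteq> []" using ehtp_edgepath[OF assms(1)] assms(3) by auto
  obtain g' z where g: "g = g' @ [z]" using ne(2) by (cases g rule: rev_cases) auto
  obtain t where b': "b' = z # t" using assms(2,4,5) g by (cases b') auto
  have "ephtp E (g @ tl b) (g @ tl (hd b # b' @ [last b]))"
    using assms(1,3,4) by (intro ephtp_concat ephtp_refl) (auto simp: ehtp_def)
  also have "g @ tl (hd b # b' @ [last b]) = g' @ z # z # t @ [last b]"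
    using g b' by simp
  also have "ephtp E \<dots> (g' @ z # t @ [last b])"
    using calculation by (intro ephtp_stutter) (simp add: ephtp_def edgepath_stutter_iff)
  also have "g' @ z # t @ [last b] = g @ tl b' @ [last b]"
    using g b' by simp
  also have "ephtp E \<dots> (hd g # g @ tl b' @ [last b])"
  proof -
    have "edgepath E (g @ tl b' @ [last b])" using calculation by (simp add: ephtp_def)
    from ephtp_sym[OF ephtp_Cons_hd[OF this]] show ?thesis using ne by simp
  qed
  finally have "ephtp E (g @ tl b) ([hd g] @ (g @ tl b') @ [last b])"
    by simp
  moreover have "(hd g, hd g) \<in> E" using edgepath_refl[OF assms(3)] ne by simp
  moreover have "(last b, last b') \<in> E" using assms(1) by (simp add: ehtp_def)
  moreover have "hd (g @ tl b) = hd g" "hd (g @ tl b') = hd g" using ne by simp_all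
  moreover have "last (g @ tl b) = last b" "last (g @ tl b') = last b'"
    using last_append_tl[OF ne(2,1) assms(4)] last_append_tl[OF ne(2) assms(5)] assms(2,4)
    by simp_all
  ultimately show ?thesis unfolding ehtp_def by (simp only:)
qed

lemma ehtp_cancel_prefix:
  assumes "ehtp E (g @ tl a) (g @ tl b)" "edgepath E g" "edgepath E a" "edgepath E b"
    "hd a = last g" "hd b = last g"
  shows "ehtp E a b"
proof -
  have ne: "g \<noteq> []" "a \<noteq> []" "b \<noteq> []" using assms by auto
  have "ehtp E (rev g @ tl (g @ tl a)) (rev g @ tl (g @ tl b))"
  proof (rule ehtp_prefix[OF assms(1) _ edgepath_rev[OF assms(2)]])
    show "hd (g @ tl a) = hd (g @ tl b)" "last (rev g) = hd (g @ tl a)" "g @ tl b \<noteq> []"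
      using ne by (simp_all add: last_rev)
  qed
  then show ?thesis
    by (rule ehtp_cong[OF _ ephtp_rev_concat_cancel[OF assms(2,3,5)]
          ephtp_rev_concat_cancel[OF assms(2,4,6)]])
qed

lemma ehtp_edge_point:
  assumes "(a, a) \<in> E" "(a, b) \<in> E" "(b, a) \<in> E" "(b, b) \<in> E"
  shows "ehtp E [a, b] [a]"
proof -
  have "ephtp E ([] @ a # a # [b]) ([] @ a # [b])"
    using assms by (intro ephtp_stutter) simp
  from ephtp_sym[OF this] show ?thesis using assms by (simp add: ehtp_def)
qed

lemma SE_entourage: "E \<in> SE U \<Longrightarrow> E \<in> U"
  by (simp add: SE_def)

lemma SE_symD: "E \<in> SE U \<Longrightarrow> (x, y) \<in> E \<Longrightarrow> (y, x) \<in> E"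
  by (auto simp: SE_def sym_def)

lemma uniformity_nonempty: "uniformity X U \<Longrightarrow> U \<noteq> {}"
  unfolding uniformity_def by (elim conjE)

lemma uniformity_subset: "uniformity X U \<Longrightarrow> \<forall>E\<in>U. Id_on X \<subseteq> E \<and> E \<subseteq> X \<times> X"
  unfolding uniformity_def by (elim conjE)

lemma uniformity_upclosed: "uniformity X U \<Longrightarrow> \<forall>E\<in>U. \<forall>F. E \<subseteq> F \<and> F \<subseteq> X \<times> X \<longrightarrow> F \<in> U"
  unfolding uniformity_def by (elim conjE)

lemma uniformity_Int: "uniformity X U \<Longrightarrow> \<forall>E\<in>U. \<forall>F\<in>U. E \<inter> F \<in> U"
  unfolding uniformity_def by (elim conjE)

lemma uniformity_converse: "uniformity X U \<Longrightarrow> \<forall>E\<in>U. E\<inverse> \<in> U"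
  unfolding uniformity_def by (elim conjE)

lemma SE_subset: "uniformity X U \<Longrightarrow> E \<in> SE U \<Longrightarrow> E \<subseteq> X \<times> X"
  unfolding SE_def using uniformity_subset by fast

lemma SE_refl: "uniformity X U \<Longrightarrow> E \<in> SE U \<Longrightarrow> x \<in> X \<Longrightarrow> (x, x) \<in> E"
  unfolding SE_def using uniformity_subset by fast

lemma SE_Int: "uniformity X U \<Longrightarrow> E \<in> SE U \<Longrightarrow> F \<in> SE U \<Longrightarrow> E \<inter> F \<in> SE U"
  unfolding SE_def sym_def using uniformity_Int by fast

lemma SE_Int_converse: "uniformity X U \<Longrightarrow> E \<in> U \<Longrightarrow> E \<inter> E\<inverse> \<in> SE U"
  unfolding SE_def sym_def using uniformity_Int uniformity_converse by fast

lemma SE_top: assumes "uniformity X U" shows "X \<times> X \<in> SE U"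
proof -
  obtain E where E: "E \<in> U" using uniformity_nonempty[OF assms] by blast
  then have "E \<subseteq> X \<times> X" using uniformity_subset[OF assms] by blast
  then have "X \<times> X \<in> U" using uniformity_upclosed[OF assms] E by blast
  then show ?thesis by (auto simp: SE_def sym_def)
qed

lemma hausdorff_unif_eqI:
  assumes "uniformity X U" "hausdorff_unif X U" "x \<in> X" "y \<in> X" "\<And>E. E \<in> SE U \<Longrightarrow> (x, y) \<in> E"
  shows "x = y"
proof -
  have "(x, y) \<in> \<Inter>U"
    using assms(5) SE_Int_converse[OF assms(1)] by blast
  then show ?thesis using assms(2) Id_on_iff unfolding hausdorff_unif_def by metis
qed

lemma pimageI: "(a, b) \<in> E \<Longrightarrow> (f a, f b) \<in> pimage f E"
  unfolding pimage_def by force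

lemma pimageE: "(u, v) \<in> pimage f E \<Longrightarrow> (\<And>a b. (a, b) \<in> E \<Longrightarrow> u = f a \<Longrightarrow> v = f b \<Longrightarrow> P) \<Longrightarrow> P"
  unfolding pimage_def by force

lemma pimage_mono: "E \<subseteq> F \<Longrightarrow> pimage f E \<subseteq> pimage f F"
  unfolding pimage_def by blast

lemma pimage_SE: assumes "generates_unif f X U Y V" "E \<in> SE U" shows "pimage f E \<in> SE V"
proof -
  have "pimage f E \<in> V" using assms by (simp add: generates_unif_def SE_def)
  moreover have "sym (pimage f E)"
  proof (rule symI)
    fix u v assume "(u, v) \<in> pimage f E"
    then show "(v, u) \<in> pimage f E" by (auto elim!: pimageE intro: pimageI SE_symD[OF assms(2)])
  qed
  ultimately show ?thesis by (simp add: SE_def)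
qed

lemma generates_unif_SE_subset:
  assumes "uniformity X U" "generates_unif f X U Y V" "W \<in> V"
  obtains F where "F \<in> SE U" "pimage f F \<subseteq> W"
proof -
  obtain E where E: "E \<in> U" "pimage f E \<subseteq> W"
    using assms(2,3) by (auto simp: generates_unif_def)
  show ?thesis
  proof (rule that)
    show "E \<inter> E\<inverse> \<in> SE U" using SE_Int_converse[OF assms(1) E(1)] .
    show "pimage f (E \<inter> E\<inverse>) \<subseteq> W" using pimage_mono[of "E \<inter> E\<inverse>" E f] E(2) by blast
  qed
qed

lemma fpre_mono: "F \<subseteq> G \<Longrightarrow> fpre f X F \<subseteq> fpre f X G"
  unfolding fpre_def by blast

lemma subset_fpre:
  assumes "uniformity X U" "E \<in> SE U" "pimage f E \<subseteq> F"
  shows "E \<subseteq> fpre f X F"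
proof
  fix e assume "e \<in> E"
  moreover obtain a b where "e = (a, b)" by fastforce
  ultimately show "e \<in> fpre f X F"
    using SE_subset[OF assms(1,2)] assms(3) pimageI[of a b E f] by (auto simp: fpre_def)
qed

lemma fpre_SE:
  assumes "uniformity X U" "generates_unif f X U Y V" "F \<in> SE V"
  shows "fpre f X F \<in> SE U"
proof -
  obtain E where E: "E \<in> SE U" "pimage f E \<subseteq> F"
    using generates_unif_SE_subset[OF assms(1,2) SE_entourage[OF assms(3)]] by blast
  moreover have "fpre f X F \<subseteq> X \<times> X" by (auto simp: fpre_def)
  ultimately have "fpre f X F \<in> U"
    using uniformity_upclosed[OF assms(1)] subset_fpre[OF assms(1) E] SE_entourage[OF E(1)] by blast
  moreover have "sym (fpre f X F)"
    using assms(3) unfolding SE_def sym_def fpre_def by blast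
  ultimately show ?thesis by (simp add: SE_def)
qed

section \<open>Generalized paths\<close>

lemma epclass_eq: "ephtp E p q \<Longrightarrow> epclass E p = epclass E q"
  unfolding epclass_def by (rule Collect_cong) (meson ephtp_sym ephtp_trans)

lemma epclass_self: "edgepath E p \<Longrightarrow> p \<in> epclass E p"
  unfolding epclass_def by (simp add: ephtp_refl)

lemma gpath_obtain_rep:
  assumes "gpath U x y c" "E \<in> SE U"
  obtains p where "p \<in> c E" "edgepath E p" "hd p = x" "last p = y"
  using assms unfolding gpath_def by (metis epclass_self)

lemma gpath_memD:
  assumes "gpath U x y c" "E \<in> SE U" "p \<in> c E"
  shows "edgepath E p \<and> hd p = x \<and> last p = y \<and> c E = epclass E p"
proof -
  obtain p0 where p0: "edgepath E p0" "hd p0 = x" "last p0 = y" "c E = epclass E p0"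
    using assms unfolding gpath_def by blast
  then have "ephtp E p0 p" using assms(3) by (simp add: epclass_def)
  then show ?thesis using p0 epclass_eq ephtp_hd_last ephtp_edgepath by metis
qed

lemma gpath_mem_iff: "gpath U x y c \<Longrightarrow> E \<in> SE U \<Longrightarrow> p \<in> c E \<Longrightarrow> q \<in> c E \<longleftrightarrow> ephtp E p q"
  using gpath_memD by (fastforce simp: epclass_def)

lemma gpath_mono: "gpath U x y c \<Longrightarrow> E \<in> SE U \<Longrightarrow> F \<in> SE U \<Longrightarrow> F \<subseteq> E \<Longrightarrow> p \<in> c F \<Longrightarrow> p \<in> c E"
  unfolding gpath_def by blast

lemma gpath_eqI:
  assumes "gpath U x y c" "gpath U x' y' d" "\<And>E. E \<in> SE U \<Longrightarrow> \<exists>p. p \<in> c E \<and> p \<in> d E"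
  shows "c = d"
proof
  fix E
  show "c E = d E"
  proof (cases "E \<in> SE U")
    case True
    then obtain p where "p \<in> c E" "p \<in> d E" using assms(3) by blast
    then show ?thesis using gpath_memD[OF assms(1) True] gpath_memD[OF assms(2) True] by metis
  qed (use assms in \<open>simp add: gpath_def\<close>)
qed

lemma gpath_endpoints:
  assumes "uniformity X U" "gpath U x y c"
  shows "x \<in> X" "y \<in> X"
proof -
  obtain p where "edgepath (X \<times> X) p" "hd p = x" "last p = y"
    using gpath_obtain_rep[OF assms(2) SE_top[OF assms(1)]] by blast
  then show "x \<in> X" "y \<in> X" using edgepath_refl[of "X \<times> X" p] by (auto dest: edgepath_nonempty)
qed

lemma gpath_endpoints_unique:
  assumes "uniformity X U" "gpath U x y c" "gpath U x' y' c"
  shows "x = x' \<and> y = y'"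
proof -
  obtain p where "p \<in> c (X \<times> X)" "hd p = x" "last p = y"
    using gpath_obtain_rep[OF assms(2) SE_top[OF assms(1)]] by blast
  then show ?thesis using gpath_memD[OF assms(3) SE_top[OF assms(1)]] by metis
qed

lemma gpath_from_iff: "uniformity X U \<Longrightarrow> gpath_from X U x c \<longleftrightarrow> (\<exists>y. gpath U x y c)"
  unfolding gpath_from_def by (meson gpath_endpoints(2))

lemma GP_iff: "uniformity X U \<Longrightarrow> c \<in> GP X U x \<longleftrightarrow> (\<exists>y. gpath U x y c)"
  by (simp add: GP_def gpath_from_iff)

lemma gp_htp_obtain:
  assumes "gp_htp E c d"
  obtains p q where "p \<in> c E" "q \<in> d E" "ehtp E p q"
  using assms by (auto simp: gp_htp_def)

lemma gp_htp_endpoints: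
  assumes "gpath U x y c" "gpath U x' y' d" "E \<in> SE U" "gp_htp E c d"
  shows "(x, x') \<in> E" "(y, y') \<in> E"
proof -
  obtain p q where "p \<in> c E" "q \<in> d E" "ehtp E p q"
    using assms(4) by (rule gp_htp_obtain)
  then show "(x, x') \<in> E" "(y, y') \<in> E"
    using gpath_memD[OF assms(1,3)] gpath_memD[OF assms(2,3)] by (auto simp: ehtp_def)
qed

lemma gp_htp_reps:
  assumes "gpath U x y c" "gpath U x' y' d" "E \<in> SE U" "gp_htp E c d" "p \<in> c E" "q \<in> d E"
  shows "ehtp E p q"
proof -
  obtain p' q' where "p' \<in> c E" "q' \<in> d E" "ehtp E p' q'"
    using assms(4) by (rule gp_htp_obtain)
  then show ?thesis
    using ehtp_cong gpath_mem_iff[OF assms(1,3)] gpath_mem_iff[OF assms(2,3)] assms(5,6) by blast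
qed

lemma gp_htp_mono:
  assumes "gpath U x y c" "gpath U x' y' d" "E \<in> SE U" "F \<in> SE U" "E \<subseteq> F" "gp_htp E c d"
  shows "gp_htp F c d"
  using assms(6) gpath_mono[OF assms(1,4,3,5)] gpath_mono[OF assms(2,4,3,5)] ehtp_mono[OF assms(5)]
  unfolding gp_htp_def by blast

lemma gp_htp_refl: "gpath U x y c \<Longrightarrow> E \<in> SE U \<Longrightarrow> gp_htp E c c"
  by (metis gp_htp_def gpath_obtain_rep ehtp_refl)

text \<open>Hausdorffness identifies the end-points, and E-homotopic representatives with the same
  end-points are homotopic.\<close>
lemma gpath_eq_if_gp_htp:
  assumes "uniformity X U" "hausdorff_unif X U" "gpath U x y a" "gpath U x y' b"
    and htp: "\<And>E. E \<in> SE U \<Longrightarrow> gp_htp E a b"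
  shows "a = b"
proof -
  have "y = y'"
    using gp_htp_endpoints(2)[OF assms(3,4) _ htp] gpath_endpoints(2)[OF assms(1)] assms(3,4)
    by (intro hausdorff_unif_eqI[OF assms(1,2)]) auto
  show ?thesis
  proof (rule gpath_eqI[OF assms(3,4)])
    fix E assume E: "E \<in> SE U"
    obtain p q where pq: "p \<in> a E" "q \<in> b E" "ehtp E p q" using htp[OF E] by (rule gp_htp_obtain)
    have p: "hd p = x" "last p = y" using gpath_memD[OF assms(3) E pq(1)] by auto
    have q: "edgepath E q" "hd q = x" "last q = y" using gpath_memD[OF assms(4) E pq(2)] \<open>y = y'\<close> by auto
    have "ephtp E p (hd q # q @ [last q])" using pq(3) p q by (simp add: ehtp_def)
    also have "ephtp E \<dots> q" using q(1) by (rule ephtp_pad)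
    finally have "q \<in> a E" using gpath_mem_iff[OF assms(3) E pq(1)] by blast
    then show "\<exists>p. p \<in> a E \<and> p \<in> b E" using pq(2) by blast
  qed
qed

definition gconst :: "('a \<times> 'a) set set \<Rightarrow> 'a \<Rightarrow> ('a \<times> 'a) set \<Rightarrow> 'a list set" where
  "gconst U x = (\<lambda>E. if E \<in> SE U then epclass E [x] else {})"

definition gcat :: "('a \<times> 'a) set set \<Rightarrow> (('a \<times> 'a) set \<Rightarrow> 'a list set)
    \<Rightarrow> (('a \<times> 'a) set \<Rightarrow> 'a list set) \<Rightarrow> ('a \<times> 'a) set \<Rightarrow> 'a list set" where
  "gcat U c d = (\<lambda>E. if E \<in> SE U then {r. \<exists>p\<in>c E. \<exists>q\<in>d E. ephtp E (p @ tl q) r} else {})"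

definition grev :: "('a \<times> 'a) set set \<Rightarrow> (('a \<times> 'a) set \<Rightarrow> 'a list set) \<Rightarrow> ('a \<times> 'a) set \<Rightarrow> 'a list set" where
  "grev U c = (\<lambda>E. if E \<in> SE U then {r. \<exists>p\<in>c E. ephtp E (rev p) r} else {})"

lemma gconst_gpath: assumes "uniformity X U" "x \<in> X" shows "gpath U x x (gconst U x)"
  unfolding gpath_def gconst_def
proof (intro conjI ballI allI impI)
  fix E assume "E \<in> SE U"
  then have "edgepath E [x]" using SE_refl[OF assms(1) _ assms(2)] by simp
  then show "\<exists>p. edgepath E p \<and> hd p = x \<and> last p = x \<and>
      (if E \<in> SE U then epclass E [x] else {}) = epclass E p"
    using \<open>E \<in> SE U\<close> by (intro exI[of _ "[x]"]) simp
next
  fix E F assume "E \<in> SE U" "F \<in> SE U" "F \<subseteq> E"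
  then show "(if F \<in> SE U then epclass F [x] else {}) \<subseteq> (if E \<in> SE U then epclass E [x] else {})"
    by (auto simp: epclass_def intro: ephtp_mono)
qed simp

lemma gconst_mem: "uniformity X U \<Longrightarrow> x \<in> X \<Longrightarrow> E \<in> SE U \<Longrightarrow> [x] \<in> gconst U x E"
  using SE_refl epclass_self[of E "[x]"] by (fastforce simp: gconst_def)

lemma gcat_eq:
  assumes "gpath U x y c" "gpath U y z d" "E \<in> SE U" "p \<in> c E" "q \<in> d E"
  shows "gcat U c d E = epclass E (p @ tl q)"
proof (rule set_eqI)
  fix r
  show "r \<in> gcat U c d E \<longleftrightarrow> r \<in> epclass E (p @ tl q)"
  proof
    assume "r \<in> gcat U c d E"
    then obtain p' q' where h: "p' \<in> c E" "q' \<in> d E" "ephtp E (p' @ tl q') r"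
      using assms(3) by (auto simp: gcat_def)
    have "ephtp E p' p" using gpath_mem_iff[OF assms(1,3) h(1)] assms(4) by blast
    moreover have "ephtp E q' q" using gpath_mem_iff[OF assms(2,3) h(2)] assms(5) by blast
    moreover have "last p' = hd q'"
      using gpath_memD[OF assms(1,3) h(1)] gpath_memD[OF assms(2,3) h(2)] by simp
    ultimately have "ephtp E (p' @ tl q') (p @ tl q)" by (rule ephtp_concat)
    then show "r \<in> epclass E (p @ tl q)"
      using h(3) unfolding epclass_def by (blast intro: ephtp_sym ephtp_trans)
  next
    assume "r \<in> epclass E (p @ tl q)"
    then show "r \<in> gcat U c d E" using assms(3,4,5) by (auto simp: gcat_def epclass_def)
  qed
qed

lemma gcat_gpath: assumes "gpath U x y c" "gpath U y z d" shows "gpath U x z (gcat U c d)"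
  unfolding gpath_def
proof (intro conjI ballI allI impI)
  fix E assume E: "E \<in> SE U"
  obtain p where p: "p \<in> c E" "edgepath E p" "hd p = x" "last p = y"
    using gpath_obtain_rep[OF assms(1) E] by blast
  obtain q where q: "q \<in> d E" "edgepath E q" "hd q = y" "last q = z"
    using gpath_obtain_rep[OF assms(2) E] by blast
  have "p \<noteq> []" "q \<noteq> []" using p q by auto
  then show "\<exists>r. edgepath E r \<and> hd r = x \<and> last r = z \<and> gcat U c d E = epclass E r"
    using p q edgepath_concat[OF p(2) q(2)] last_append_tl[of p q] gcat_eq[OF assms E p(1) q(1)]
    by (intro exI[of _ "p @ tl q"]) auto
next
  fix E F assume E: "E \<in> SE U" and F: "F \<in> SE U" and FE: "F \<subseteq> E"
  show "gcat U c d F \<subseteq> gcat U c d E"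
    using E F gpath_mono[OF assms(1) E F FE] gpath_mono[OF assms(2) E F FE] ephtp_mono[OF FE]
    by (auto simp: gcat_def) blast
qed (simp add: gcat_def)

lemma gcat_mem:
  assumes "gpath U x y c" "gpath U y z d" "E \<in> SE U" "p \<in> c E" "q \<in> d E"
  shows "p @ tl q \<in> gcat U c d E"
proof -
  have "edgepath E (p @ tl q)"
    using gpath_memD[OF assms(1,3,4)] gpath_memD[OF assms(2,3,5)] edgepath_concat by metis
  then show ?thesis using gcat_eq[OF assms] epclass_self by metis
qed

lemma grev_eq:
  assumes "gpath U x y c" "E \<in> SE U" "p \<in> c E"
  shows "grev U c E = epclass E (rev p)"
proof (rule set_eqI)
  fix r
  show "r \<in> grev U c E \<longleftrightarrow> r \<in> epclass E (rev p)"
  proof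
    assume "r \<in> grev U c E"
    then obtain p' where h: "p' \<in> c E" "ephtp E (rev p') r" using assms(2) by (auto simp: grev_def)
    have "ephtp E (rev p') (rev p)"
      using gpath_mem_iff[OF assms(1,2) h(1)] assms(3) by (blast intro: ephtp_rev)
    then show "r \<in> epclass E (rev p)"
      using h(2) unfolding epclass_def by (blast intro: ephtp_sym ephtp_trans)
  next
    assume "r \<in> epclass E (rev p)"
    then show "r \<in> grev U c E" using assms(2,3) by (auto simp: grev_def epclass_def)
  qed
qed

lemma grev_gpath: assumes "gpath U x y c" shows "gpath U y x (grev U c)"
  unfolding gpath_def
proof (intro conjI ballI allI impI)
  fix E assume E: "E \<in> SE U"
  obtain p where p: "p \<in> c E" "edgepath E p" "hd p = x" "last p = y"
    using gpath_obtain_rep[OF assms(1) E] by blast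
  then have "p \<noteq> []" by auto
  then show "\<exists>r. edgepath E r \<and> hd r = y \<and> last r = x \<and> grev U c E = epclass E r"
    using grev_eq[OF assms E p(1)] edgepath_rev[OF p(2)] p
    by (intro exI[of _ "rev p"]) (auto simp: hd_rev last_rev)
next
  fix E F assume E: "E \<in> SE U" and F: "F \<in> SE U" and FE: "F \<subseteq> E"
  show "grev U c F \<subseteq> grev U c E"
    using E F gpath_mono[OF assms(1) E F FE] ephtp_mono[OF FE] by (auto simp: grev_def)
qed (simp add: grev_def)

lemma grev_mem: assumes "gpath U x y c" "E \<in> SE U" "p \<in> c E" shows "rev p \<in> grev U c E"
proof -
  have "edgepath E (rev p)" using gpath_memD[OF assms] edgepath_rev by metis
  then show ?thesis using grev_eq[OF assms] epclass_self by metis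
qed

lemma gcat_grev_cancel:
  assumes "gpath U a b g" "gpath U b w c"
  shows "gcat U (grev U g) (gcat U g c) = c"
proof (rule gpath_eqI[OF gcat_gpath[OF grev_gpath[OF assms(1)] gcat_gpath[OF assms]] assms(2)])
  fix E assume E: "E \<in> SE U"
  obtain p where p: "p \<in> g E" "edgepath E p" "last p = b"
    using gpath_obtain_rep[OF assms(1) E] by blast
  obtain q where q: "q \<in> c E" "edgepath E q" "hd q = b"
    using gpath_obtain_rep[OF assms(2) E] by blast
  have "rev p @ tl (p @ tl q) \<in> gcat U (grev U g) (gcat U g c) E"
    by (rule gcat_mem[OF grev_gpath[OF assms(1)] gcat_gpath[OF assms] E grev_mem[OF assms(1) E p(1)]
          gcat_mem[OF assms E p(1) q(1)]])
  moreover have "ephtp E (rev p @ tl (p @ tl q)) q"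
    using p q by (intro ephtp_rev_concat_cancel) auto
  ultimately have "q \<in> gcat U (grev U g) (gcat U g c) E"
    using gpath_mem_iff[OF gcat_gpath[OF grev_gpath[OF assms(1)] gcat_gpath[OF assms]] E] by blast
  then show "\<exists>p. p \<in> gcat U (grev U g) (gcat U g c) E \<and> p \<in> c E" using q by blast
qed

lemma gp_htp_gcat_left:
  assumes "gpath U u v g" "gpath U v w a" "gpath U v w' b" "E \<in> SE U" "gp_htp E a b"
  shows "gp_htp E (gcat U g a) (gcat U g b)"
proof -
  obtain p q where pq: "p \<in> a E" "q \<in> b E" "ehtp E p q" using assms(5) by (rule gp_htp_obtain)
  obtain r where r: "r \<in> g E" "edgepath E r" "last r = v" using gpath_obtain_rep[OF assms(1,4)] by blast
  have "ehtp E (r @ tl p) (r @ tl q)"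
  proof (rule ehtp_prefix[OF pq(3)])
    show "hd p = hd q" "edgepath E r" "last r = hd p" "q \<noteq> []"
      using r gpath_memD[OF assms(2,4) pq(1)] gpath_memD[OF assms(3,4) pq(2)] by auto
  qed
  then show ?thesis unfolding gp_htp_def
    using gcat_mem[OF assms(1,2,4) r(1) pq(1)] gcat_mem[OF assms(1,3,4) r(1) pq(2)] by blast
qed

lemma gp_htp_gcat_left_cancel:
  assumes "gpath U u v g" "gpath U v w a" "gpath U v w' b" "E \<in> SE U"
    "gp_htp E (gcat U g a) (gcat U g b)"
  shows "gp_htp E a b"
proof -
  obtain p where p: "p \<in> a E" "edgepath E p" "hd p = v" using gpath_obtain_rep[OF assms(2,4)] by blast
  obtain q where q: "q \<in> b E" "edgepath E q" "hd q = v" using gpath_obtain_rep[OF assms(3,4)] by blast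
  obtain r where r: "r \<in> g E" "edgepath E r" "last r = v" using gpath_obtain_rep[OF assms(1,4)] by blast
  have "ehtp E (r @ tl p) (r @ tl q)"
    by (rule gp_htp_reps[OF gcat_gpath[OF assms(1,2)] gcat_gpath[OF assms(1,3)] assms(4,5)
          gcat_mem[OF assms(1,2,4) r(1) p(1)] gcat_mem[OF assms(1,3,4) r(1) q(1)]])
  then have "ehtp E p q"
    using ehtp_cancel_prefix[OF _ r(2) p(2) q(2)] p(3) q(3) r(3) by simp
  then show ?thesis unfolding gp_htp_def using p q by blast
qed

lemma echain_Cons_Cons [simp]: "echain X E (x # y # p) \<longleftrightarrow> x \<in> X \<and> (x, y) \<in> E \<and> echain X E (y # p)"
  unfolding echain_def adjacent_Cons_Cons[where R = "\<lambda>a b. (a, b) \<in> E"] by auto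

lemma echain_singleton [simp]: "echain X E [x] \<longleftrightarrow> x \<in> X"
  by (simp add: echain_def)

lemma echain_mono: "E \<subseteq> F \<Longrightarrow> echain X E p \<Longrightarrow> echain X F p"
  unfolding echain_def by blast

lemma echain_lift:
  assumes step: "\<And>x b. x \<in> X \<Longrightarrow> (f x, b) \<in> G \<Longrightarrow> \<exists>z\<in>X. (x, z) \<in> E \<and> f z = b"
    and "echain Y G \<beta>" "a \<in> X" "hd \<beta> = f a"
  shows "\<exists>\<alpha>. echain X E \<alpha> \<and> hd \<alpha> = a \<and> map f \<alpha> = \<beta>"
  using assms(2-4)
proof (induction \<beta> arbitrary: a rule: induct_list012)
  case (2 b)
  then show ?case by (intro exI[of _ "[a]"]) simp
next
  case (3 b b' rest)
  from "3.prems" have "(f a, b') \<in> G" "echain Y G (b' # rest)" by simp_all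
  from step[OF "3.prems"(2) this(1)] obtain z where z: "z \<in> X" "(a, z) \<in> E" "f z = b'"
    by auto
  have "hd (b' # rest) = f z" using z(3) by simp
  from "3.IH"(2)[OF \<open>echain Y G (b' # rest)\<close> z(1) this] obtain \<alpha>
    where \<alpha>: "echain X E \<alpha>" "hd \<alpha> = z" "map f \<alpha> = b' # rest"
    by (elim exE conjE)
  then obtain t where t: "\<alpha> = z # t" by (cases \<alpha>) auto
  have "echain X E (a # \<alpha>)" using t \<alpha>(1) z(2) "3.prems"(2) by simp
  moreover have "map f (a # \<alpha>) = b # b' # rest" using \<alpha>(3) "3.prems"(3) by simp
  ultimately show ?case by (intro exI[of _ "a # \<alpha>"]) simp
qed (simp add: echain_def)

lemma echain_gpath:
  assumes "uniformity X U" "E \<in> SE U"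
    and join: "\<forall>(x, y)\<in>F. \<exists>c. gpath U x y c \<and> gp_short E x y c"
    and "echain X F \<alpha>"
  shows "\<exists>c. gpath U (hd \<alpha>) (last \<alpha>) c \<and> \<alpha> \<in> c E"
  using assms(4)
proof (induction \<alpha> rule: induct_list012)
  case (2 x)
  then show ?case using gconst_gpath[OF assms(1)] gconst_mem[OF assms(1) _ assms(2)] by auto
next
  case (3 x y zs)
  obtain c1 where c1: "gpath U x y c1" "[x, y] \<in> c1 E"
    using join "3.prems" by (auto simp: gp_short_def)
  obtain c2 where c2: "gpath U y (last (y # zs)) c2" "y # zs \<in> c2 E"
    using "3.IH"(2) "3.prems" by auto
  have "[x, y] @ tl (y # zs) \<in> gcat U c1 c2 E" by (rule gcat_mem[OF c1(1) c2(1) assms(2) c1(2) c2(2)])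
  then show ?case using gcat_gpath[OF c1(1) c2(1)] by auto
qed (simp add: echain_def)

lemma joinable_gpath:
  assumes "uniformity X U" "uniformly_joinable X U" "chain_connected X U" "x \<in> X" "y \<in> X"
  obtains c where "gpath U x y c"
proof -
  obtain F where F: "F \<in> SE U" "\<forall>(x, y)\<in>F. \<exists>c. gpath U x y c \<and> gp_short (X \<times> X) x y c"
    using assms(2) SE_top[OF assms(1)] unfolding uniformly_joinable_def by blast
  obtain p where "echain X F p" "hd p = x" "last p = y"
    using assms(3-5) F(1) unfolding chain_connected_def by blast
  then show ?thesis using echain_gpath[OF assms(1) SE_top[OF assms(1)] F(2)] that by blast
qed

section \<open>The induced map on generalized paths\<close>

text \<open>GP2 for generalized paths from the single base point x0; conjugation with generalized
  paths between base points makes it equivalent to GP2.\<close>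
definition GP2_at ::
  "('a \<Rightarrow> 'b) \<Rightarrow> 'a set \<Rightarrow> ('a \<times> 'a) set set \<Rightarrow> ('b \<times> 'b) set set \<Rightarrow> 'a \<Rightarrow> bool" where
  "GP2_at f X U V x0 \<longleftrightarrow> (\<forall>E\<in>SE U. \<exists>F\<in>SE U. \<forall>\<alpha>\<in>GP X U x0. \<forall>\<beta>\<in>GP X U x0.
     gp_htp (pimage f F) (ftilde f X V \<alpha>) (ftilde f X V \<beta>) \<longrightarrow> gp_htp E \<alpha> \<beta>)"

context
  fixes f :: "'a \<Rightarrow> 'b" and X :: "'a set" and U :: "('a \<times> 'a) set set"
    and Y :: "'b set" and V :: "('b \<times> 'b) set set"
  assumes uX: "uniformity X U" and uY: "uniformity Y V" and gen: "generates_unif f X U Y V"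
begin

lemma ftilde_eq:
  assumes "gpath U x y c" "F \<in> SE V" "p \<in> c (fpre f X F)"
  shows "ftilde f X V c F = epclass F (map f p)"
proof (rule set_eqI)
  have E: "fpre f X F \<in> SE U" by (rule fpre_SE[OF uX gen assms(2)])
  have fpre: "\<And>a b. (a, b) \<in> fpre f X F \<Longrightarrow> (f a, f b) \<in> F" by (simp add: fpre_def)
  fix r
  show "r \<in> ftilde f X V c F \<longleftrightarrow> r \<in> epclass F (map f p)"
  proof
    assume "r \<in> ftilde f X V c F"
    then obtain p' where h: "p' \<in> c (fpre f X F)" "ephtp F (map f p') r"
      using assms(2) by (auto simp: ftilde_def)
    have "ephtp (fpre f X F) p' p" using gpath_mem_iff[OF assms(1) E h(1)] assms(3) by blast
    then have "ephtp F (map f p') (map f p)" using ephtp_map[of _ f F, OF fpre] by blast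
    then show "r \<in> epclass F (map f p)"
      using h(2) unfolding epclass_def by (blast intro: ephtp_sym ephtp_trans)
  next
    assume "r \<in> epclass F (map f p)"
    then show "r \<in> ftilde f X V c F" using assms(2,3) by (auto simp: ftilde_def epclass_def)
  qed
qed

lemma ftilde_mem:
  assumes "gpath U x y c" "E \<in> SE U" "F \<in> SE V" "E \<subseteq> fpre f X F" "p \<in> c E"
  shows "map f p \<in> ftilde f X V c F"
proof -
  have E': "fpre f X F \<in> SE U" by (rule fpre_SE[OF uX gen assms(3)])
  have p: "p \<in> c (fpre f X F)" by (rule gpath_mono[OF assms(1) E' assms(2,4,5)])
  have "edgepath (fpre f X F) p" using gpath_memD[OF assms(1) E' p] by blast
  then have "edgepath F (map f p)" by (rule edgepath_map[rotated]) (simp add: fpre_def)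
  then show ?thesis using ftilde_eq[OF assms(1,3) p] epclass_self by metis
qed

lemma ftilde_gpath: assumes "gpath U x y c" shows "gpath V (f x) (f y) (ftilde f X V c)"
  unfolding gpath_def
proof (intro conjI ballI allI impI)
  fix F assume F: "F \<in> SE V"
  have E: "fpre f X F \<in> SE U" by (rule fpre_SE[OF uX gen F])
  obtain p where p: "p \<in> c (fpre f X F)" "edgepath (fpre f X F) p" "hd p = x" "last p = y"
    using gpath_obtain_rep[OF assms E] by blast
  then have "p \<noteq> []" by auto
  then show "\<exists>r. edgepath F r \<and> hd r = f x \<and> last r = f y \<and> ftilde f X V c F = epclass F r"
    using p ftilde_eq[OF assms F p(1)] edgepath_map[of "fpre f X F" f F p]
    by (intro exI[of _ "map f p"]) (auto simp: fpre_def hd_map last_map)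
next
  fix F G assume F: "F \<in> SE V" and G: "G \<in> SE V" and GF: "G \<subseteq> F"
  show "ftilde f X V c G \<subseteq> ftilde f X V c F"
  proof
    fix r assume "r \<in> ftilde f X V c G"
    then obtain p where h: "p \<in> c (fpre f X G)" "ephtp G (map f p) r"
      using G by (auto simp: ftilde_def)
    have "p \<in> c (fpre f X F)"
      by (rule gpath_mono[OF assms fpre_SE[OF uX gen F] fpre_SE[OF uX gen G] fpre_mono[OF GF] h(1)])
    then show "r \<in> ftilde f X V c F" using ephtp_mono[OF GF h(2)] F by (auto simp: ftilde_def)
  qed
qed (simp add: ftilde_def)

lemma ftilde_GP: "c \<in> GP X U x0 \<Longrightarrow> ftilde f X V c \<in> GP Y V (f x0)"
  using ftilde_gpath by (auto simp: GP_iff[OF uX] GP_iff[OF uY])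

lemma ftilde_rep:
  assumes "gpath U x y c" "F \<in> SE V"
  obtains p where "p \<in> c (fpre f X F)" "map f p \<in> ftilde f X V c F"
  using gpath_obtain_rep[OF assms(1) fpre_SE[OF uX gen assms(2)]]
    ftilde_mem[OF assms(1) fpre_SE[OF uX gen assms(2)] assms(2) order_refl] by blast

lemma ftilde_gcat:
  assumes "gpath U x y c" "gpath U y z d"
  shows "ftilde f X V (gcat U c d) = gcat V (ftilde f X V c) (ftilde f X V d)"
proof (rule gpath_eqI[OF ftilde_gpath[OF gcat_gpath[OF assms]]
      gcat_gpath[OF ftilde_gpath[OF assms(1)] ftilde_gpath[OF assms(2)]]])
  fix F assume F: "F \<in> SE V"
  have E: "fpre f X F \<in> SE U" by (rule fpre_SE[OF uX gen F])
  obtain p where p: "p \<in> c (fpre f X F)" "map f p \<in> ftilde f X V c F"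
    using ftilde_rep[OF assms(1) F] .
  obtain q where q: "q \<in> d (fpre f X F)" "map f q \<in> ftilde f X V d F"
    using ftilde_rep[OF assms(2) F] .
  have "map f (p @ tl q) \<in> ftilde f X V (gcat U c d) F"
    by (rule ftilde_mem[OF gcat_gpath[OF assms] E F order_refl gcat_mem[OF assms E p(1) q(1)]])
  moreover have "map f p @ tl (map f q) \<in> gcat V (ftilde f X V c) (ftilde f X V d) F"
    by (rule gcat_mem[OF ftilde_gpath[OF assms(1)] ftilde_gpath[OF assms(2)] F p(2) q(2)])
  ultimately show "\<exists>r. r \<in> ftilde f X V (gcat U c d) F \<and> r \<in> gcat V (ftilde f X V c) (ftilde f X V d) F"
    by (auto simp: map_tl)
qed

lemma ftilde_grev:
  assumes "gpath U x y c"
  shows "ftilde f X V (grev U c) = grev V (ftilde f X V c)"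
proof (rule gpath_eqI[OF ftilde_gpath[OF grev_gpath[OF assms]] grev_gpath[OF ftilde_gpath[OF assms]]])
  fix F assume F: "F \<in> SE V"
  have E: "fpre f X F \<in> SE U" by (rule fpre_SE[OF uX gen F])
  obtain p where p: "p \<in> c (fpre f X F)" "map f p \<in> ftilde f X V c F"
    using ftilde_rep[OF assms F] .
  have "map f (rev p) \<in> ftilde f X V (grev U c) F"
    by (rule ftilde_mem[OF grev_gpath[OF assms] E F order_refl grev_mem[OF assms E p(1)]])
  moreover have "rev (map f p) \<in> grev V (ftilde f X V c) F"
    by (rule grev_mem[OF ftilde_gpath[OF assms] F p(2)])
  ultimately show "\<exists>r. r \<in> ftilde f X V (grev U c) F \<and> r \<in> grev V (ftilde f X V c) F"
    by (auto simp: rev_map)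
qed

lemma ftilde_short_gp_htp_gconst:
  assumes F: "F \<in> SE U" and E0: "E0 \<in> SE U" "E0 \<subseteq> F"
    and c: "gpath U u v c" "[u, v] \<in> c E0" and uv: "(u, v) \<in> F"
    and x: "x \<in> X" "f x = f u"
  shows "gp_htp (pimage f F) (ftilde f X V c) (ftilde f X V (gconst U x))"
proof -
  define G where "G = pimage f F"
  have G: "G \<in> SE V" unfolding G_def by (rule pimage_SE[OF gen F])
  have "F \<subseteq> fpre f X G" unfolding G_def by (rule subset_fpre[OF uX F]) simp
  then have "[f u, f v] \<in> ftilde f X V c G"
    using ftilde_mem[OF c(1) E0(1) G _ c(2)] E0(2) by auto
  moreover have "[f x] \<in> ftilde f X V (gconst U x) G"
    using ftilde_mem[OF gconst_gpath[OF uX x(1)] fpre_SE[OF uX gen G] G order_refl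
        gconst_mem[OF uX x(1) fpre_SE[OF uX gen G]]] by simp
  moreover have "ehtp G [f u, f v] [f x]"
  proof -
    have "u \<in> X" "v \<in> X" using SE_subset[OF uX F] uv by auto
    then have "(u, u) \<in> F" "(v, v) \<in> F" "(v, u) \<in> F"
      using SE_refl[OF uX F] SE_symD[OF F] uv by auto
    then show ?thesis using ehtp_edge_point[of "f u" G "f v"] uv x(2) by (simp add: G_def pimageI)
  qed
  ultimately show ?thesis unfolding gp_htp_def G_def by blast
qed

text \<open>Lift the image of a short generalized path from u to v with f u = f x at x by GP1; by GP2
  the lift is close to the constant path, so it ends near x.\<close>
lemma GP1_GP2_lift_edge:
  assumes uj: "uniformly_joinable X U" and g1: "GP1 f X U Y V" and g2: "GP2 f X U Y V"
    and E: "E \<in> SE U"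
  obtains F where "F \<in> SE U"
    "\<And>x b. x \<in> X \<Longrightarrow> (f x, b) \<in> pimage f F \<Longrightarrow> \<exists>z\<in>X. (x, z) \<in> E \<and> f z = b"
proof -
  obtain F2 where F2: "F2 \<in> SE U" and P2: "\<forall>x0\<in>X. \<forall>\<alpha> \<beta>.
     gpath_from X U x0 \<alpha> \<and> gpath_from X U x0 \<beta>
     \<and> gp_htp (pimage f F2) (ftilde f X V \<alpha>) (ftilde f X V \<beta>) \<longrightarrow> gp_htp E \<alpha> \<beta>"
    using g2 E unfolding GP2_def by blast
  obtain F1 where F1: "F1 \<in> SE U" and J: "\<forall>(x, y)\<in>F1. \<exists>c. gpath U x y c \<and> gp_short (E \<inter> F2) x y c"
    using uj SE_Int[OF uX E F2] unfolding uniformly_joinable_def by blast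
  have "\<exists>z\<in>X. (x, z) \<in> E \<and> f z = b" if x: "x \<in> X" and xb: "(f x, b) \<in> pimage f (F1 \<inter> F2)" for x b
  proof -
    obtain u v where uv: "(u, v) \<in> F1 \<inter> F2" "f x = f u" "b = f v"
      using xb by (auto elim: pimageE)
    obtain c where c: "gpath U u v c" "[u, v] \<in> c (E \<inter> F2)"
      using J uv(1) by (auto simp: gp_short_def)
    have fc: "gpath V (f x) b (ftilde f X V c)" using ftilde_gpath[OF c(1)] uv by simp
    obtain d where d: "gpath_from X U x d" "ftilde f X V d = ftilde f X V c"
      using g1 x fc gpath_from_iff[OF uY] unfolding GP1_def by blast
    then obtain z where z: "gpath U x z d" using gpath_from_iff[OF uX] by blast
    have "gp_htp (pimage f F2) (ftilde f X V d) (ftilde f X V (gconst U x))"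
      using ftilde_short_gp_htp_gconst[OF F2 SE_Int[OF uX E F2] _ c] uv x d(2) by auto
    moreover have "gpath_from X U x (gconst U x)"
      using gconst_gpath[OF uX x] gpath_from_iff[OF uX] by blast
    ultimately have "gp_htp E d (gconst U x)" using P2 x d(1) by blast
    then have "(z, x) \<in> E" by (rule gp_htp_endpoints(2)[OF z gconst_gpath[OF uX x] E])
    moreover have "f z = b" using gpath_endpoints_unique[OF uY fc] ftilde_gpath[OF z] d(2) by simp
    ultimately show ?thesis using SE_symD[OF E] gpath_endpoints(2)[OF uX z] by blast
  qed
  then show ?thesis using that SE_Int[OF uX F1 F2] by blast
qed

lemma C1_if_GP1_GP2:
  assumes "uniformly_joinable X U" "GP1 f X U Y V" "GP2 f X U Y V"
  shows "C1 f X U Y"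
  unfolding C1_def
proof
  fix E assume "E \<in> SE U"
  then obtain F where F: "F \<in> SE U"
    and lift: "\<And>x b. x \<in> X \<Longrightarrow> (f x, b) \<in> pimage f F \<Longrightarrow> \<exists>z\<in>X. (x, z) \<in> E \<and> f z = b"
    using GP1_GP2_lift_edge[OF assms] by blast
  show "\<exists>F\<in>SE U. \<forall>x0\<in>X. \<forall>\<beta>. echain Y (pimage f F) \<beta> \<and> hd \<beta> = f x0 \<longrightarrow>
      (\<exists>\<alpha>. echain X E \<alpha> \<and> hd \<alpha> = x0 \<and> map f \<alpha> = \<beta>)"
  proof (intro bexI[OF _ F] ballI allI impI)
    fix x0 \<beta> assume "x0 \<in> X" "echain Y (pimage f F) \<beta> \<and> hd \<beta> = f x0"
    then show "\<exists>\<alpha>. echain X E \<alpha> \<and> hd \<alpha> = x0 \<and> map f \<alpha> = \<beta>"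
      using echain_lift[where G = "pimage f F" and E = E and Y = Y and \<beta> = \<beta> and a = x0, OF lift]
      by simp
  qed
qed

lemma echain_ftilde_rep:
  assumes "E \<in> SE U" "G \<in> SE V" "E \<subseteq> fpre f X G"
    and "\<forall>(x, y)\<in>F. \<exists>c. gpath U x y c \<and> gp_short E x y c" "echain X F \<gamma>"
  shows "\<exists>c. gpath U (hd \<gamma>) (last \<gamma>) c \<and> \<gamma> \<in> c E \<and> map f \<gamma> \<in> ftilde f X V c G"
  using echain_gpath[OF uX assms(1,4,5)] ftilde_mem[OF _ assms(1-3)] by blast

text \<open>Chains are representatives of generalized paths, so GP2 applied to these generalized
  paths transfers homotopies of image chains back to the chains.\<close>
lemma C2_if_GP2:
  assumes uj: "uniformly_joinable X U" and g2: "GP2 f X U Y V"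
  shows "C2 f X U"
  unfolding C2_def
proof
  fix E assume E: "E \<in> SE U"
  obtain F2 where F2: "F2 \<in> SE U" and P2: "\<forall>x0\<in>X. \<forall>\<alpha> \<beta>.
     gpath_from X U x0 \<alpha> \<and> gpath_from X U x0 \<beta>
     \<and> gp_htp (pimage f F2) (ftilde f X V \<alpha>) (ftilde f X V \<beta>) \<longrightarrow> gp_htp E \<alpha> \<beta>"
    using g2 E unfolding GP2_def by blast
  define E0 where "E0 = E \<inter> F2"
  define G where "G = pimage f F2"
  have E0: "E0 \<in> SE U" unfolding E0_def by (rule SE_Int[OF uX E F2])
  have G: "G \<in> SE V" unfolding G_def by (rule pimage_SE[OF gen F2])
  have "F2 \<subseteq> fpre f X G" unfolding G_def by (rule subset_fpre[OF uX F2]) simp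
  then have E0G: "E0 \<subseteq> fpre f X G" by (auto simp: E0_def)
  obtain F1 where F1: "F1 \<in> SE U" and J: "\<forall>(x, y)\<in>F1. \<exists>c. gpath U x y c \<and> gp_short E0 x y c"
    using uj E0 unfolding uniformly_joinable_def by blast
  define F where "F = F1 \<inter> E0"
  have F: "F \<in> SE U" unfolding F_def by (rule SE_Int[OF uX F1 E0])
  have FG: "pimage f F \<subseteq> G" unfolding G_def F_def E0_def by (rule pimage_mono) blast
  have rep: "\<exists>g. gpath U (hd \<gamma>) (last \<gamma>) g \<and> \<gamma> \<in> g E \<and> map f \<gamma> \<in> ftilde f X V g G"
    if \<gamma>: "echain X F \<gamma>" for \<gamma>
  proof -
    have "F \<subseteq> F1" "E0 \<subseteq> E" by (simp_all add: F_def E0_def)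
    then show ?thesis
      using echain_ftilde_rep[OF E0 G E0G J echain_mono[OF _ \<gamma>]] gpath_mono[OF _ E E0] by blast
  qed
  have "ehtp E \<alpha> \<beta>"
    if a: "echain X F \<alpha>" and b: "echain X F \<beta>" and hab: "hd \<alpha> = hd \<beta>"
      and h: "ehtp (pimage f F) (map f \<alpha>) (map f \<beta>)" for \<alpha> \<beta>
  proof -
    obtain ga where ga: "gpath U (hd \<alpha>) (last \<alpha>) ga" "\<alpha> \<in> ga E" "map f \<alpha> \<in> ftilde f X V ga G"
      using rep[OF a] by blast
    obtain gb where gb: "gpath U (hd \<beta>) (last \<beta>) gb" "\<beta> \<in> gb E" "map f \<beta> \<in> ftilde f X V gb G"
      using rep[OF b] by blast
    have "gp_htp G (ftilde f X V ga) (ftilde f X V gb)"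
      using ehtp_mono[OF FG h] ga(3) gb(3) unfolding gp_htp_def by blast
    moreover have "gpath_from X U (hd \<alpha>) ga" "gpath_from X U (hd \<alpha>) gb"
      unfolding gpath_from_iff[OF uX] using ga(1) gb(1) hab by auto
    moreover have "hd \<alpha> \<in> X" using gpath_endpoints(1)[OF uX ga(1)] .
    ultimately have "gp_htp E ga gb" using P2 unfolding G_def by blast
    then show ?thesis using gp_htp_reps[OF ga(1) gb(1) E _ ga(2) gb(2)] by blast
  qed
  then show "\<exists>F\<in>SE U. \<forall>\<alpha> \<beta>. echain X F \<alpha> \<and> echain X F \<beta> \<and> hd \<alpha> = hd \<beta>
     \<and> ehtp (pimage f F) (map f \<alpha>) (map f \<beta>) \<longrightarrow> ehtp E \<alpha> \<beta>" using F by blast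
qed

lemma GP2_at_if_GP2:
  assumes "GP2 f X U Y V" "x0 \<in> X"
  shows "GP2_at f X U V x0"
  unfolding GP2_at_def
proof
  fix E assume "E \<in> SE U"
  then obtain F where "F \<in> SE U" and P: "\<forall>x0\<in>X. \<forall>\<alpha> \<beta>.
      gpath_from X U x0 \<alpha> \<and> gpath_from X U x0 \<beta>
      \<and> gp_htp (pimage f F) (ftilde f X V \<alpha>) (ftilde f X V \<beta>) \<longrightarrow> gp_htp E \<alpha> \<beta>"
    using assms(1) unfolding GP2_def by blast
  then show "\<exists>F\<in>SE U. \<forall>\<alpha>\<in>GP X U x0. \<forall>\<beta>\<in>GP X U x0.
      gp_htp (pimage f F) (ftilde f X V \<alpha>) (ftilde f X V \<beta>) \<longrightarrow> gp_htp E \<alpha> \<beta>"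
    using assms(2) by (auto simp: GP_def)
qed

lemma ftilde_inj_on:
  assumes "hausdorff_unif X U" "GP2_at f X U V x0"
  shows "inj_on (ftilde f X V) (GP X U x0)"
proof (rule inj_onI)
  fix a b assume a: "a \<in> GP X U x0" and b: "b \<in> GP X U x0" and eq: "ftilde f X V a = ftilde f X V b"
  obtain y y' where y: "gpath U x0 y a" and y': "gpath U x0 y' b" using a b by (auto simp: GP_iff[OF uX])
  show "a = b"
  proof (rule gpath_eq_if_gp_htp[OF uX assms(1) y y'])
    fix E assume "E \<in> SE U"
    then obtain F where F: "F \<in> SE U" and P: "\<forall>\<alpha>\<in>GP X U x0. \<forall>\<beta>\<in>GP X U x0.
        gp_htp (pimage f F) (ftilde f X V \<alpha>) (ftilde f X V \<beta>) \<longrightarrow> gp_htp E \<alpha> \<beta>"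
      using assms(2) unfolding GP2_at_def by blast
    have "gp_htp (pimage f F) (ftilde f X V a) (ftilde f X V b)"
      using gp_htp_refl[OF ftilde_gpath[OF y] pimage_SE[OF gen F]] eq by simp
    then show "gp_htp E a b" using P a b by blast
  qed
qed

lemma ftilde_image:
  assumes "GP1 f X U Y V" "x0 \<in> X"
  shows "ftilde f X V ` GP X U x0 = GP Y V (f x0)"
proof
  show "ftilde f X V ` GP X U x0 \<subseteq> GP Y V (f x0)" using ftilde_GP by blast
  show "GP Y V (f x0) \<subseteq> ftilde f X V ` GP X U x0"
  proof
    fix c assume "c \<in> GP Y V (f x0)"
    then obtain d where "gpath_from X U x0 d" "ftilde f X V d = c"
      using assms unfolding GP1_def GP_def by blast
    then show "c \<in> ftilde f X V ` GP X U x0" by (auto simp: GP_def)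
  qed
qed

lemma ftilde_ucont: "ucont (GP X U x0) (GP_unif X U x0) (GP_unif Y V (f x0)) (ftilde f X V)"
  unfolding ucont_def
proof
  fix W assume "W \<in> GP_unif Y V (f x0)"
  then obtain G where G: "G \<in> SE V"
    and GW: "{(c, d). c \<in> GP Y V (f x0) \<and> d \<in> GP Y V (f x0) \<and> gp_htp G c d} \<subseteq> W"
    unfolding GP_unif_def by blast
  obtain F where F: "F \<in> SE U" "pimage f F \<subseteq> G"
    using generates_unif_SE_subset[OF uX gen SE_entourage[OF G]] by blast
  have FG: "F \<subseteq> fpre f X G" by (rule subset_fpre[OF uX F])
  have FG': "(f a, f b) \<in> G" if "(a, b) \<in> F" for a b using F(2) pimageI[OF that] by blast
  have "(ftilde f X V a, ftilde f X V b) \<in> W"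
    if a: "a \<in> GP X U x0" and b: "b \<in> GP X U x0" and h: "gp_htp F a b" for a b
  proof -
    obtain y y' where y: "gpath U x0 y a" and y': "gpath U x0 y' b"
      using a b by (auto simp: GP_iff[OF uX])
    obtain p q where pq: "p \<in> a F" "q \<in> b F" "ehtp F p q" using h by (rule gp_htp_obtain)
    have "q \<noteq> []" using gpath_memD[OF y' F(1) pq(2)] by auto
    then have "ehtp G (map f p) (map f q)"
      using ehtp_map[where E = F and F = G and f = f] FG' pq(3) by blast
    then have "gp_htp G (ftilde f X V a) (ftilde f X V b)"
      using ftilde_mem[OF y F(1) G FG pq(1)] ftilde_mem[OF y' F(1) G FG pq(2)]
      unfolding gp_htp_def by blast
    then show ?thesis using GW ftilde_GP[OF a] ftilde_GP[OF b] by blast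
  qed
  then show "{(a, b). a \<in> GP X U x0 \<and> b \<in> GP X U x0 \<and> (ftilde f X V a, ftilde f X V b) \<in> W}
      \<in> GP_unif X U x0"
    unfolding GP_unif_def by (intro CollectI conjI bexI[OF _ F(1)]) auto
qed

lemma inv_ucont_if_GP2_at:
  assumes g2: "GP2_at f X U V x0" and bij: "bij_betw (ftilde f X V) (GP X U x0) (GP Y V (f x0))"
  shows "ucont (GP Y V (f x0)) (GP_unif Y V (f x0)) (GP_unif X U x0)
      (inv_into (GP X U x0) (ftilde f X V))" (is "ucont ?B ?UB ?UA ?g")
  unfolding ucont_def
proof
  fix W assume "W \<in> GP_unif X U x0"
  then obtain E where E: "E \<in> SE U"
    and EW: "{(c, d). c \<in> GP X U x0 \<and> d \<in> GP X U x0 \<and> gp_htp E c d} \<subseteq> W"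
    unfolding GP_unif_def by blast
  obtain F where F: "F \<in> SE U" and P: "\<forall>\<alpha>\<in>GP X U x0. \<forall>\<beta>\<in>GP X U x0.
      gp_htp (pimage f F) (ftilde f X V \<alpha>) (ftilde f X V \<beta>) \<longrightarrow> gp_htp E \<alpha> \<beta>"
    using g2 E unfolding GP2_at_def by blast
  have g: "?g c \<in> GP X U x0" "ftilde f X V (?g c) = c" if "c \<in> ?B" for c
    using that bij by (auto simp: bij_betw_def inv_into_into f_inv_into_f)
  have "(?g c, ?g d) \<in> W" if "c \<in> ?B" "d \<in> ?B" "gp_htp (pimage f F) c d" for c d
    using P g[OF that(1)] g[OF that(2)] that(3) EW by auto
  then show "{(c, d). c \<in> ?B \<and> d \<in> ?B \<and> (?g c, ?g d) \<in> W} \<in> ?UB"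
    unfolding GP_unif_def using pimage_SE[OF gen F] by blast
qed

lemma GP2_at_if_inv_ucont:
  assumes bij: "bij_betw (ftilde f X V) (GP X U x0) (GP Y V (f x0))"
    and ic: "ucont (GP Y V (f x0)) (GP_unif Y V (f x0)) (GP_unif X U x0)
      (inv_into (GP X U x0) (ftilde f X V))" (is "ucont ?B ?UB ?UA ?g")
  shows "GP2_at f X U V x0"
  unfolding GP2_at_def
proof
  fix E assume E: "E \<in> SE U"
  define W where "W = {(a, b). a \<in> GP X U x0 \<and> b \<in> GP X U x0 \<and> gp_htp E a b}"
  have "W \<in> ?UA" unfolding GP_unif_def W_def using E by blast
  then have "{(c, d). c \<in> ?B \<and> d \<in> ?B \<and> (?g c, ?g d) \<in> W} \<in> ?UB"
    using ic unfolding ucont_def by blast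
  then obtain G where G: "G \<in> SE V"
    and GW: "{(c, d). c \<in> ?B \<and> d \<in> ?B \<and> gp_htp G c d} \<subseteq> {(c, d). c \<in> ?B \<and> d \<in> ?B \<and> (?g c, ?g d) \<in> W}"
    unfolding GP_unif_def by blast
  obtain F where F: "F \<in> SE U" "pimage f F \<subseteq> G"
    using generates_unif_SE_subset[OF uX gen SE_entourage[OF G]] by blast
  have "gp_htp E a b"
    if a: "a \<in> GP X U x0" and b: "b \<in> GP X U x0"
      and h: "gp_htp (pimage f F) (ftilde f X V a) (ftilde f X V b)" for a b
  proof -
    obtain y y' where y: "gpath U x0 y a" and y': "gpath U x0 y' b"
      using a b by (auto simp: GP_iff[OF uX])
    have "gp_htp G (ftilde f X V a) (ftilde f X V b)"
      by (rule gp_htp_mono[OF ftilde_gpath[OF y] ftilde_gpath[OF y'] pimage_SE[OF gen F(1)] G F(2) h])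
    then have "(?g (ftilde f X V a), ?g (ftilde f X V b)) \<in> W"
      using GW ftilde_GP[OF a] ftilde_GP[OF b] by blast
    then show ?thesis using bij a b unfolding W_def bij_betw_def by simp
  qed
  then show "\<exists>F\<in>SE U. \<forall>a\<in>GP X U x0. \<forall>b\<in>GP X U x0.
      gp_htp (pimage f F) (ftilde f X V a) (ftilde f X V b) \<longrightarrow> gp_htp E a b"
    using F(1) by blast
qed

lemma GP1_if_ftilde_onto:
  assumes uj: "uniformly_joinable X U" and cc: "chain_connected X U" and x0: "x0 \<in> X"
    and onto: "GP Y V (f x0) \<subseteq> ftilde f X V ` GP X U x0"
  shows "GP1 f X U Y V"
  unfolding GP1_def
proof (intro ballI allI impI)
  fix x1 c assume x1: "x1 \<in> X" and "gpath_from Y V (f x1) c"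
  then obtain w where w: "gpath V (f x1) w c" by (auto simp: gpath_from_iff[OF uY])
  obtain \<gamma> where \<gamma>: "gpath U x0 x1 \<gamma>" using joinable_gpath[OF uX uj cc x0 x1] .
  have f\<gamma>: "gpath V (f x0) (f x1) (ftilde f X V \<gamma>)" by (rule ftilde_gpath[OF \<gamma>])
  have "gcat V (ftilde f X V \<gamma>) c \<in> GP Y V (f x0)"
    using gcat_gpath[OF f\<gamma> w] by (auto simp: GP_iff[OF uY])
  with onto obtain d where "d \<in> GP X U x0" and d: "ftilde f X V d = gcat V (ftilde f X V \<gamma>) c"
    by (metis imageE subsetD)
  then obtain z where z: "gpath U x0 z d" by (auto simp: GP_iff[OF uX])
  have "ftilde f X V (gcat U (grev U \<gamma>) d) = gcat V (ftilde f X V (grev U \<gamma>)) (ftilde f X V d)"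
    by (rule ftilde_gcat[OF grev_gpath[OF \<gamma>] z])
  also have "\<dots> = gcat V (grev V (ftilde f X V \<gamma>)) (gcat V (ftilde f X V \<gamma>) c)"
    using ftilde_grev[OF \<gamma>] d by simp
  also have "\<dots> = c" by (rule gcat_grev_cancel[OF f\<gamma> w])
  finally show "\<exists>d. gpath_from X U x1 d \<and> ftilde f X V d = c"
    unfolding gpath_from_iff[OF uX] using gcat_gpath[OF grev_gpath[OF \<gamma>] z] by blast
qed

text \<open>Conjugating by a generalized path from x0 to x1 moves GP2 from x0 to any base point.\<close>
lemma GP2_if_GP2_at:
  assumes uj: "uniformly_joinable X U" and cc: "chain_connected X U" and x0: "x0 \<in> X"
    and g2: "GP2_at f X U V x0"
  shows "GP2 f X U Y V"
  unfolding GP2_def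
proof
  fix E assume "E \<in> SE U"
  then obtain F where F: "F \<in> SE U" and P: "\<forall>a\<in>GP X U x0. \<forall>b\<in>GP X U x0.
      gp_htp (pimage f F) (ftilde f X V a) (ftilde f X V b) \<longrightarrow> gp_htp E a b"
    using g2 unfolding GP2_at_def by blast
  have "gp_htp E \<alpha> \<beta>"
    if x1: "x1 \<in> X" and a: "gpath_from X U x1 \<alpha>" and b: "gpath_from X U x1 \<beta>"
      and h: "gp_htp (pimage f F) (ftilde f X V \<alpha>) (ftilde f X V \<beta>)" for x1 \<alpha> \<beta>
  proof -
    obtain y y' where y: "gpath U x1 y \<alpha>" and y': "gpath U x1 y' \<beta>"
      using a b by (auto simp: gpath_from_iff[OF uX])
    obtain \<gamma> where \<gamma>: "gpath U x0 x1 \<gamma>" using joinable_gpath[OF uX uj cc x0 x1] .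
    have "gp_htp (pimage f F) (gcat V (ftilde f X V \<gamma>) (ftilde f X V \<alpha>))
        (gcat V (ftilde f X V \<gamma>) (ftilde f X V \<beta>))"
      by (rule gp_htp_gcat_left[OF ftilde_gpath[OF \<gamma>] ftilde_gpath[OF y] ftilde_gpath[OF y']
            pimage_SE[OF gen F] h])
    then have "gp_htp (pimage f F) (ftilde f X V (gcat U \<gamma> \<alpha>)) (ftilde f X V (gcat U \<gamma> \<beta>))"
      using ftilde_gcat[OF \<gamma> y] ftilde_gcat[OF \<gamma> y'] by simp
    moreover have "gcat U \<gamma> \<alpha> \<in> GP X U x0" "gcat U \<gamma> \<beta> \<in> GP X U x0"
      using gcat_gpath[OF \<gamma> y] gcat_gpath[OF \<gamma> y'] by (auto simp: GP_iff[OF uX])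
    ultimately have "gp_htp E (gcat U \<gamma> \<alpha>) (gcat U \<gamma> \<beta>)" using P by blast
    then show ?thesis by (rule gp_htp_gcat_left_cancel[OF \<gamma> y y' \<open>E \<in> SE U\<close>])
  qed
  then show "\<exists>F\<in>SE U. \<forall>x0\<in>X. \<forall>\<alpha> \<beta>. gpath_from X U x0 \<alpha> \<and> gpath_from X U x0 \<beta>
      \<and> gp_htp (pimage f F) (ftilde f X V \<alpha>) (ftilde f X V \<beta>) \<longrightarrow> gp_htp E \<alpha> \<beta>"
    using F by blast
qed


lemma uniform_equivalence_if_GP1_GP2:
  assumes "hausdorff_unif X U" "GP1 f X U Y V" "GP2 f X U Y V" "x0 \<in> X"
  shows "uniform_equivalence (GP X U x0) (GP_unif X U x0) (GP Y V (f x0)) (GP_unif Y V (f x0))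
      (ftilde f X V)"
proof -
  have at: "GP2_at f X U V x0" by (rule GP2_at_if_GP2[OF assms(3,4)])
  have bij: "bij_betw (ftilde f X V) (GP X U x0) (GP Y V (f x0))"
    unfolding bij_betw_def using ftilde_inj_on[OF assms(1) at] ftilde_image[OF assms(2,4)] by blast
  then show ?thesis
    unfolding uniform_equivalence_def using ftilde_ucont inv_ucont_if_GP2_at[OF at bij] by blast
qed

lemma GP1_GP2_if_uniform_equivalence:
  assumes "uniformly_joinable X U" "chain_connected X U" "x0 \<in> X"
    and "uniform_equivalence (GP X U x0) (GP_unif X U x0) (GP Y V (f x0)) (GP_unif Y V (f x0))
      (ftilde f X V)"
  shows "GP1 f X U Y V" "GP2 f X U Y V"
proof -
  have bij: "bij_betw (ftilde f X V) (GP X U x0) (GP Y V (f x0))"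
    and ic: "ucont (GP Y V (f x0)) (GP_unif Y V (f x0)) (GP_unif X U x0)
      (inv_into (GP X U x0) (ftilde f X V))"
    using assms(4) by (simp_all add: uniform_equivalence_def)
  show "GP1 f X U Y V"
    using bij GP1_if_ftilde_onto[OF assms(1-3)] by (simp add: bij_betw_def)
  show "GP2 f X U Y V"
    by (rule GP2_if_GP2_at[OF assms(1-3) GP2_at_if_inv_ucont[OF bij ic]])
qed

end

theorem mainTheorem14:
  fixes f :: "'a \<Rightarrow> 'b" and X :: "'a set" and U :: "('a \<times> 'a) set set"
    and Y :: "'b set" and V :: "('b \<times> 'b) set set"
  assumes "uniformity X U" and "hausdorff_unif X U" and "X \<noteq> {}"
    and "uniformly_joinable X U" and "chain_connected X U"
    and "uniformity Y V" and "hausdorff_unif Y V"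
    and "generates_unif f X U Y V"
  shows "(gen_uniform_covering f X U Y V \<longleftrightarrow> GP1 f X U Y V \<and> GP2 f X U Y V)
       \<and> (GP1 f X U Y V \<and> GP2 f X U Y V \<longleftrightarrow>
          (\<exists>x0\<in>X. uniform_equivalence (GP X U x0) (GP_unif X U x0)
                     (GP Y V (f x0)) (GP_unif Y V (f x0)) (ftilde f X V)))"
proof -
  note ctx = assms(1,6,8)
  have "gen_uniform_covering f X U Y V \<longleftrightarrow> GP1 f X U Y V \<and> GP2 f X U Y V"
    using C1_if_GP1_GP2[OF ctx assms(4)] C2_if_GP2[OF ctx assms(4)] assms(8)
    by (auto simp: gen_uniform_covering_def)
  moreover obtain x0 where "x0 \<in> X" using assms(3) by blast
  ultimately show ?thesis
    using uniform_equivalence_if_GP1_GP2[OF ctx assms(2)]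
      GP1_GP2_if_uniform_equivalence[OF ctx assms(4,5)] by blast
qed

end
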